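(* Let $k \geq 3$, let $F$ be a $k$-edge graph with $\gamma(F)=1$, and let $G$ be a connected graph with exactly $2k+3$ edges that contains two vertex-disjoint copies $F_1$ and $F_2$ of $F$. Then either $\iota(G,F) = 1$ or $G$ is a $(2k+3,F)$-special graph.
   Context: All graphs are finite and simple. For $D \subseteq V(G)$, $N_G[D]$ is the closed neighbourhood of $D$. A set $D \subseteq V(G)$ is an $F$-isolating set of $G$ if $G - N_G[D]$ contains no subgraph isomorphic to $F$; $\iota(G,F)$ is the minimum size of such a set. $\gamma(F)=1$ means $F$ has a vertex adjacent to all other vertices of $F$. ($m,F$)-special graphs: let $F$ be a connected $k$-edge graph. Write $m+1 = q(k+2)+r$ with integers $q \ge 0$, $0 \le r \le k+1$. If $q = 0$, an $(m,F)$-special graph is any connected $m$-edge graph. If $q \geq 1$, take distinct vertices $v_1,\dots,v_q$, copies $F_1,\dots,F_q$ of $F$ such that $V(F_1),\dots,V(F_q),\{v_1,\dots,v_q\}$ are pairwise disjoint, vertices $w_i \in V(F_i)$, and let $G_i$ be the graph with vertex set $\{v_i\}\cup V(F_i)$ and edge set $E(F_i)\cup\{v_iw_i\}$. Let $T$ be a tree with vertex set $\{v_1,\dots,v_q\}$ and $T'$ a connected $r$-edge graph with $V(T') \cap \bigcup_i V(G_i) = \{v_q\}$. The graph with vertex set $V(T')\cup\bigcup_i V(G_i)$ and edge set $E(T)\cup E(T')\cup \bigcup_i E(G_i)$ is an $(m,F)$-special graph. (For $m = 2k+3$ one has $q=2$, $r=0$: such a graph is two disjoint copies of $F$, each joined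 by one edge to one of two adjacent new vertices $v_1,v_2$.) *)

theory Defs
  imports Main
begin

definition sgraph :: "'a set \<Rightarrow> 'a set set \<Rightarrow> bool" where
  "sgraph V E \<longleftrightarrow> finite V \<and> (\<forall>e\<in>E. \<exists>u v. u \<noteq> v \<and> e = {u, v} \<and> u \<in> V \<and> v \<in> V)"

definition adj_rel :: "'a set set \<Rightarrow> ('a \<times> 'a) set" where
  "adj_rel E = {(u, v). {u, v} \<in> E}"

definition connected_graph :: "'a set \<Rightarrow> 'a set set \<Rightarrow> bool" where
  "connected_graph V E \<longleftrightarrow> sgraph V E \<and> V \<noteq> {} \<and>
     (\<forall>u\<in>V. \<forall>v\<in>V. (u, v) \<in> (adj_rel E)\<^sup>*)"

definition tree_graph :: "'a set \<Rightarrow> 'a set set \<Rightarrow> bool" where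
  "tree_graph V E \<longleftrightarrow> connected_graph V E \<and> card E + 1 = card V"

definition embeds :: "('b \<Rightarrow> 'a) \<Rightarrow> 'b set \<Rightarrow> 'b set set \<Rightarrow> 'a set \<Rightarrow> 'a set set \<Rightarrow> bool" where
  "embeds f VF EF V E \<longleftrightarrow> inj_on f VF \<and> f ` VF \<subseteq> V \<and> (\<forall>e\<in>EF. f ` e \<in> E)"

definition has_copy :: "'b set \<Rightarrow> 'b set set \<Rightarrow> 'a set \<Rightarrow> 'a set set \<Rightarrow> bool" where
  "has_copy VF EF V E \<longleftrightarrow> (\<exists>f. embeds f VF EF V E)"

definition closed_nbhd :: "'a set \<Rightarrow> 'a set set \<Rightarrow> 'a set \<Rightarrow> 'a set" where
  "closed_nbhd V E D = D \<union> {v \<in> V. \<exists>u\<in>D. {u, v} \<in> E}"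

definition isolating :: "'a set \<Rightarrow> 'a set set \<Rightarrow> 'b set \<Rightarrow> 'b set set \<Rightarrow> 'a set \<Rightarrow> bool" where
  "isolating V E VF EF D \<longleftrightarrow> D \<subseteq> V \<and>
     (let W = V - closed_nbhd V E D in \<not> has_copy VF EF W {e \<in> E. e \<subseteq> W})"

definition iota :: "'a set \<Rightarrow> 'a set set \<Rightarrow> 'b set \<Rightarrow> 'b set set \<Rightarrow> nat" where
  "iota V E VF EF = (LEAST n. \<exists>D. isolating V E VF EF D \<and> card D = n)"

definition gamma_one :: "'b set \<Rightarrow> 'b set set \<Rightarrow> bool" where
  "gamma_one VF EF \<longleftrightarrow> (\<exists>c\<in>VF. \<forall>u\<in>VF. u \<noteq> c \<longrightarrow> {c, u} \<in> EF)"

definition iso_copy :: "'b set \<Rightarrow> 'b set set \<Rightarrow> 'a set \<Rightarrow> 'a set set \<Rightarrow> bool" where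
  "iso_copy VF EF VC EC \<longleftrightarrow> (\<exists>g. bij_betw g VF VC \<and> EC = (\<lambda>e. g ` e) ` EF)"

text \<open>Being special is invariant
  under isomorphism, so we express that G itself is of the constructed form, with all
  vertices of the construction taken from the vertex type of G.\<close>

definition special :: "nat \<Rightarrow> 'b set \<Rightarrow> 'b set set \<Rightarrow> 'a set \<Rightarrow> 'a set set \<Rightarrow> bool" where
  "special m VF EF V E \<longleftrightarrow>
    (let k = card EF; q = (m + 1) div (k + 2); r = (m + 1) mod (k + 2) in
     (q = 0 \<and> connected_graph V E \<and> card E = m) \<or>
     (q \<ge> 1 \<and>
      (\<exists>(v :: nat \<Rightarrow> 'a) (FV :: nat \<Rightarrow> 'a set) (FE :: nat \<Rightarrow> 'a set set) (w :: nat \<Rightarrow> 'a)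
          (ET :: 'a set set) (VT' :: 'a set) (ET' :: 'a set set).
         inj_on v {1..q} \<and>
         (\<forall>i\<in>{1..q}. iso_copy VF EF (FV i) (FE i)) \<and>
         (\<forall>i\<in>{1..q}. \<forall>j\<in>{1..q}. i \<noteq> j \<longrightarrow> FV i \<inter> FV j = {}) \<and>
         (\<forall>i\<in>{1..q}. FV i \<inter> v ` {1..q} = {}) \<and>
         (\<forall>i\<in>{1..q}. w i \<in> FV i) \<and>
         tree_graph (v ` {1..q}) ET \<and>
         connected_graph VT' ET' \<and> card ET' = r \<and>
         VT' \<inter> (\<Union>i\<in>{1..q}. insert (v i) (FV i)) = {v q} \<and>
         V = VT' \<union> (\<Union>i\<in>{1..q}. insert (v i) (FV i)) \<and>
         E = ET \<union> ET' \<union> (\<Union>i\<in>{1..q}. insert {v i, w i} (FE i)))))"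

end

theory Submission
  imports Defs
begin

(* If no single vertex isolates F, then for every vertex x some copy of F avoids N[x].
   Suppose first that all edges leaving some copy Z of F end in one vertex v. A copy avoiding
   N[v] is disjoint from Z, connectivity gives a path of length three from v into it, and these
   2k + 3 edges are all of G, so G is special. Otherwise at least two edges leave every copy.
   Take a copy and a second one avoiding the closed neighbourhood of its centre; they are
   disjoint, so exactly three further edges remain, at least two of them meeting each copy.
   Since a copy is a star with chords, it cannot spread over two parts joined only by a
   matching except through one spoke at its centre. Choosing x on the three extra edges and
   counting the edges of G - N[x] available to a copy of F then refutes every configuration
   or exhibits a copy with a single exit vertex. *)

lemma rtrancl_adj_rel_leaves_set:
  assumes "(u, y) \<in> (adj_rel E)\<^sup>*" "u \<in> S" "y \<notin> S"
  shows "\<exists>e\<in>E. e \<inter> S \<noteq> {} \<and> e - S \<noteq> {}"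
  using assms
proof (induction rule: rtrancl_induct)
  case (step y z)
  show ?case
  proof (cases "y \<in> S")
    case True
    from step(2) have "{y, z} \<in> E" by (simp add: adj_rel_def)
    with True step(5) show ?thesis by (intro bexI[of _ "{y,z}"]) auto
  next
    case False
    with step show ?thesis by blast
  qed
qed simp

lemma connected_graph_edge: "a \<noteq> b \<Longrightarrow> connected_graph {a,b} {{a,b}}"
  by (auto simp: connected_graph_def sgraph_def adj_rel_def insert_commute)

lemma connected_graph_singleton: "connected_graph {a} {}"
  unfolding connected_graph_def sgraph_def by auto

lemma card_le_card_Un: "S \<subseteq> A \<union> B \<Longrightarrow> finite A \<Longrightarrow> finite B \<Longrightarrow> card S \<le> card A + card B"
  by (meson card_Un_le card_mono finite_UnI le_trans)

lemma card_le_1_if_subset_singleton: "A \<subseteq> {a} \<Longrightarrow> card A \<le> 1"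
  using card_mono[of "{a}" A] by simp

lemma large_subset_of_three:
  assumes "card Y = 3" "R \<subseteq> Y" "2 \<le> card R"
  shows "R = Y \<or> (\<exists>f\<in>Y. R = Y - {f})"
proof (cases "R = Y")
  case False
  then obtain f where f: "f \<in> Y" "f \<notin> R" using assms(2) by blast
  have fin: "finite Y" using assms(1) by (simp add: card_ge_0_finite)
  have "R \<subseteq> Y - {f}" using assms(2) f by blast
  moreover have "card (Y - {f}) = 2" using f fin assms(1) by simp
  ultimately have "R = Y - {f}" using card_seteq[of "Y - {f}" R] fin assms(3) by simp
  then show ?thesis using f by blast
qed simp

lemma two_large_subsets_of_three:
  assumes Y: "card Y = 3" and sub: "R \<subseteq> Y" "W \<subseteq> Y" and large: "2 \<le> card R" "2 \<le> card W"
  obtains (both_full) "R = Y" "W = Y"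
  | (R_pair) g1 g2 f where "Y = {g1,g2,f}" "g1 \<noteq> g2" "R = {g1,g2}" "W = Y" "f \<notin> R"
  | (W_pair) g1 g2 f where "Y = {g1,g2,f}" "g1 \<noteq> g2" "W = {g1,g2}" "R = Y" "f \<notin> W"
  | (same_pair) g1 g2 g where "Y = {g1,g2,g}" "R = {g1,g2}" "W = {g1,g2}" "g \<notin> R"
  | (shared) h e f where "Y = {h,e,f}" "R = {h,e}" "W = {h,f}" "h \<noteq> e" "h \<noteq> f" "e \<noteq> f"
proof -
  have fin: "finite Y" using Y by (simp add: card_ge_0_finite)
  have pair: "\<exists>g1 g2. Y - {f} = {g1,g2} \<and> g1 \<noteq> g2 \<and> Y = {g1,g2,f}" if "f \<in> Y" for f
  proof -
    have "card (Y - {f}) = 2" using that fin Y by simp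
    then obtain g1 g2 where "Y - {f} = {g1,g2}" "g1 \<noteq> g2" by (meson card_2_iff)
    then show ?thesis using that by blast
  qed
  consider "R = Y" | f where "f \<in> Y" "R = Y - {f}"
    using large_subset_of_three[OF Y sub(1) large(1)] by blast
  then show thesis
  proof cases
    case 1
    consider "W = Y" | f where "f \<in> Y" "W = Y - {f}"
      using large_subset_of_three[OF Y sub(2) large(2)] by blast
    then show thesis
    proof cases
      case 2
      then show thesis using pair[of f] W_pair 1 by blast
    qed (use 1 both_full in blast)
  next
    case R: 2
    consider "W = Y" | f' where "f' \<in> Y" "W = Y - {f'}"
      using large_subset_of_three[OF Y sub(2) large(2)] by blast
    then show thesis
    proof cases
      case 1
      then show thesis using pair[of f] R_pair R by blast
    next
      case W: 2
      show thesis
      proof (cases "f = f'")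
        case True
        then show thesis using pair[of f] same_pair R W by blast
      next
        case False
        have "card (Y - {f, f'}) = 1" using R(1) W(1) False fin Y by (simp add: card_Diff_subset)
        then obtain h where h: "Y - {f, f'} = {h}" by (rule card_1_singletonE)
        then have "Y = {h, f', f}" "R = {h, f'}" "W = {h, f}" using R W False by auto
        moreover have "h \<noteq> f'" "h \<noteq> f" using h by auto
        ultimately show thesis using shared False by blast
      qed
    qed
  qed
qed

abbreviation avoiding :: "'a set set \<Rightarrow> 'a set \<Rightarrow> 'a set set" where
  "avoiding D M \<equiv> {e\<in>D. e \<inter> M = {}}"

lemma star_across_matching:
  assumes edges: "\<forall>e\<in>D. \<exists>a b. a \<noteq> b \<and> e = {a,b} \<and> a \<in> U \<and> b \<in> U"
    and centre: "w \<in> U" "\<forall>u\<in>U. u \<noteq> w \<longrightarrow> {w,u} \<in> D"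
    and cover: "U \<subseteq> P1 \<union> P2" and disjoint: "P1 \<inter> P2 = {}"
    and crossing: "\<forall>e\<in>D. e \<inter> P1 \<noteq> {} \<longrightarrow> e \<inter> P2 \<noteq> {} \<longrightarrow> e \<in> X"
    and matching: "\<forall>e\<in>X. \<forall>e'\<in>X. e \<noteq> e' \<longrightarrow> e \<inter> e' = {}"
    and w: "w \<in> P1"
  shows "(U \<subseteq> P1 \<and> D \<subseteq> Pow P1) \<or>
         (\<exists>b\<in>P2. {w,b} \<in> X \<and> {w,b} \<in> D \<and> U \<subseteq> insert b P1 \<and> D \<subseteq> insert {w,b} (Pow P1))"
proof (cases "U \<inter> P2 = {}")
  case True
  then have "U \<subseteq> P1" using cover by blast
  moreover have "D \<subseteq> Pow P1" using edges \<open>U \<subseteq> P1\<close> by fastforce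
  ultimately show ?thesis by blast
next
  case False
  then obtain b where b: "b \<in> U" "b \<in> P2" by blast
  have spoke_crosses: "{w,u} \<in> X \<and> {w,u} \<in> D" if "u \<in> U" "u \<in> P2" for u
  proof -
    have "u \<noteq> w" using that w disjoint by blast
    then have "{w,u} \<in> D" using centre that(1) by blast
    moreover have "{w,u} \<inter> P1 \<noteq> {}" "{w,u} \<inter> P2 \<noteq> {}" using w that(2) by blast+
    ultimately show ?thesis using crossing[rule_format, of "{w,u}"] by blast
  qed
  have in_X_is_spoke: "e = {w,b}" if "e \<in> X" "b \<in> e" for e
    using matching[rule_format, OF that(1), of "{w,b}"] that(2) spoke_crosses[OF b] by blast
  have "u = b" if "u \<in> U" "u \<in> P2" for u
  proof -
    have "{w,u} = {w,b}"
      using matching[rule_format, of "{w,u}" "{w,b}"] spoke_crosses[OF that] spoke_crosses[OF b]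
      by blast
    then show ?thesis using w that(2) disjoint by (auto simp: doubleton_eq_iff)
  qed
  then have Ub: "U \<subseteq> insert b P1" using cover by blast
  have "D \<subseteq> insert {w,b} (Pow P1)"
  proof
    fix e assume e: "e \<in> D"
    then obtain x y where xy: "x \<noteq> y" "e = {x,y}" "x \<in> U" "y \<in> U" using edges by blast
    show "e \<in> insert {w,b} (Pow P1)"
    proof (cases "b \<in> e")
      case True
      have "e \<inter> P1 \<noteq> {}" using True xy Ub by auto
      moreover have "e \<inter> P2 \<noteq> {}" using True b(2) by blast
      ultimately have "e \<in> X" using crossing[rule_format, OF e] by blast
      then show ?thesis using in_X_is_spoke True by blast
    qed (use xy Ub in auto)
  qed
  then show ?thesis using b spoke_crosses Ub by blast
qed

lemma special_two_copies_joined_by_path: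
  assumes copies: "iso_copy VF EF U1 D1" "iso_copy VF EF U2 D2" "U1 \<inter> U2 = {}"
    and v: "v1 \<notin> U1" "v1 \<notin> U2" "v2 \<notin> U1" "v2 \<notin> U2" "v1 \<noteq> v2"
    and w: "w1 \<in> U1" "w2 \<in> U2"
    and V: "V = U1 \<union> U2 \<union> {v1, v2}"
    and E: "E = D1 \<union> D2 \<union> {{v1,w1}, {v1,v2}, {v2,w2}}"
  shows "special (2 * card EF + 3) VF EF V E"
proof -
  let ?k = "card EF"
  have k2: "2 * ?k + 3 + 1 = (?k + 2) * 2" by simp
  have q: "(2 * ?k + 3 + 1) div (?k + 2) = 2" and r: "(2 * ?k + 3 + 1) mod (?k + 2) = 0"
    unfolding k2 by (simp_all only: nonzero_mult_div_cancel_left mod_mult_self1_is_0)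
  have one_two: "{1..2::nat} = {1,2}" by auto
  define vv where "vv = (\<lambda>i::nat. if i = 1 then v1 else v2)"
  define FV where "FV = (\<lambda>i::nat. if i = 1 then U1 else U2)"
  define FE where "FE = (\<lambda>i::nat. if i = 1 then D1 else D2)"
  define ww where "ww = (\<lambda>i::nat. if i = 1 then w1 else w2)"
  have vv_image: "vv ` {1..2} = {v1, v2}" unfolding one_two vv_def by auto
  have inj: "inj_on vv {1..2}" using v(5) unfolding one_two vv_def by auto
  have iso: "\<forall>i\<in>{1..2}. iso_copy VF EF (FV i) (FE i)"
    unfolding one_two FV_def FE_def using copies by auto
  have disj: "\<forall>i\<in>{1..2}. \<forall>j\<in>{1..2}. i \<noteq> j \<longrightarrow> FV i \<inter> FV j = {}"
    unfolding one_two FV_def using copies(3) by auto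
  have apart: "\<forall>i\<in>{1..2}. FV i \<inter> vv ` {1..2} = {}"
    unfolding one_two FV_def vv_def using v by auto
  have attach: "\<forall>i\<in>{1..2}. ww i \<in> FV i" unfolding one_two FV_def ww_def using w by auto
  have tree: "tree_graph (vv ` {1..2}) {{v1,v2}}"
    unfolding vv_image tree_graph_def using connected_graph_edge[OF v(5)] v(5) by simp
  have tail: "connected_graph {vv 2} {}" by (rule connected_graph_singleton)
  have meet: "{vv 2} \<inter> (\<Union>i\<in>{1..2}. insert (vv i) (FV i)) = {vv 2}" unfolding one_two by auto
  have V_eq: "V = {vv 2} \<union> (\<Union>i\<in>{1..2}. insert (vv i) (FV i))"
    unfolding one_two V vv_def FV_def by auto
  have E_eq: "E = {{v1,v2}} \<union> {} \<union> (\<Union>i\<in>{1..2}. insert {vv i, ww i} (FE i))"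
    unfolding one_two E vv_def ww_def FE_def by auto
  \<comment> \<open>q = 2 and r = 0: the tree T is the edge v1 v2 and T' is the single vertex v2\<close>
  show ?thesis
    unfolding special_def Let_def q r
    apply (intro disjI2 conjI, simp)
    apply (rule exI[of _ vv], rule exI[of _ FV], rule exI[of _ FE], rule exI[of _ ww],
        rule exI[of _ "{{v1,v2}}"], rule exI[of _ "{vv 2}"], rule exI[of _ "{}"])
    using inj iso disj apart attach tree tail meet V_eq E_eq by (intro conjI; (fact | simp))
qed

section \<open>Copies of F in G\<close>

locale isolation_setting =
  fixes VF :: "'b set" and EF :: "'b set set" and V :: "'a set" and E :: "'a set set"
  assumes sgraph_F: "sgraph VF EF" and card_EF_ge_3: "3 \<le> card EF"
    and gamma_one_F: "gamma_one VF EF"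
    and connected_G: "connected_graph V E" and card_E: "card E = 2 * card EF + 3"
begin

abbreviation "n \<equiv> card VF"
abbreviation "k \<equiv> card EF"

definition is_copy :: "'a set \<Rightarrow> 'a set set \<Rightarrow> bool" where
  "is_copy U D \<longleftrightarrow> (\<exists>f. embeds f VF EF V E \<and> U = f ` VF \<and> D = (\<lambda>e. f ` e) ` EF)"

definition cnbh :: "'a \<Rightarrow> 'a set" where
  "cnbh x = closed_nbhd V E {x}"

definition outdeg :: "'a set \<Rightarrow> 'a set set \<Rightarrow> nat" where
  "outdeg U D = card {e\<in>E. e \<notin> D \<and> e \<inter> U \<noteq> {}}"

definition deg :: "'a set set \<Rightarrow> 'a \<Rightarrow> nat" where
  "deg D v = card {e\<in>D. v \<in> e}"

lemma sgraph_G: "sgraph V E"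
  using connected_G by (simp add: connected_graph_def)

lemma finite_V: "finite V"
  using sgraph_G by (simp add: sgraph_def)

lemma edge_of_G:
  assumes "e \<in> E"
  obtains a b where "a \<noteq> b" "e = {a,b}" "a \<in> V" "b \<in> V"
  using sgraph_G assms unfolding sgraph_def by blast

lemma E_subset_Pow: "E \<subseteq> Pow V"
  by (blast elim: edge_of_G)

lemma finite_E: "finite E"
  using finite_subset[OF E_subset_Pow] finite_V by simp

lemma edge_leaving:
  assumes "S \<subseteq> V" "u \<in> S" "y \<in> V" "y \<notin> S"
  obtains a b where "{a,b} \<in> E" "a \<in> S" "b \<notin> S"
proof -
  have "\<forall>u\<in>V. \<forall>v\<in>V. (u, v) \<in> (adj_rel E)\<^sup>*"
    using connected_G by (simp add: connected_graph_def)
  moreover have "u \<in> V" using assms(1,2) by blast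
  ultimately have "(u, y) \<in> (adj_rel E)\<^sup>*" using assms(3) by simp
  from rtrancl_adj_rel_leaves_set[OF this assms(2,4)]
  obtain e where e: "e \<in> E" "e \<inter> S \<noteq> {}" "e - S \<noteq> {}" by blast
  then obtain a b where "e = {a,b}" by (elim edge_of_G)
  then show thesis using that[of a b] that[of b a] e by (cases "a \<in> S") (auto simp: insert_commute)
qed

lemma Union_E: "\<Union>E = V"
proof
  show "\<Union>E \<subseteq> V" using E_subset_Pow by blast
  show "V \<subseteq> \<Union>E"
  proof
    fix y assume y: "y \<in> V"
    show "y \<in> \<Union>E"
    proof (cases "V = {y}")
      case True
      then have "E = {}" using sgraph_G by (auto simp: sgraph_def)
      then show ?thesis using card_E by simp
    next
      case False
      then obtain z where "z \<in> V" "z \<noteq> y" using y by blast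
      then obtain a b where "{a,b} \<in> E" "a \<in> {y}" "b \<notin> {y}"
        using edge_leaving[of "{y}" y z] y by blast
      then show ?thesis by blast
    qed
  qed
qed

lemma cnbh_iff: "y \<in> cnbh x \<longleftrightarrow> y = x \<or> {x, y} \<in> E"
  using E_subset_Pow by (auto simp: cnbh_def closed_nbhd_def)

lemma cnbh_self: "x \<in> cnbh x"
  by (simp add: cnbh_iff)

lemma cnbh_edge: "{x,y} \<in> E \<Longrightarrow> y \<in> cnbh x" "{y,x} \<in> E \<Longrightarrow> y \<in> cnbh x"
  by (simp_all add: cnbh_iff insert_commute)

lemma cnbh_subset_V: "x \<in> V \<Longrightarrow> cnbh x \<subseteq> V"
  using E_subset_Pow by (auto simp: cnbh_def closed_nbhd_def)

lemma finite_VF: "finite VF"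
  using sgraph_F by (simp add: sgraph_def)

lemma EF_subset_Pow: "EF \<subseteq> Pow VF"
  using sgraph_F by (auto simp: sgraph_def)

lemma card_VF_ge_3: "3 \<le> n"
proof (rule ccontr)
  have "EF \<subseteq> {B. B \<subseteq> VF \<and> card B = 2}"
    using sgraph_F by (auto simp: sgraph_def)
  then have "k \<le> n choose 2"
    using card_mono[of "{B. B \<subseteq> VF \<and> card B = 2}" EF] n_subsets[OF finite_VF, of 2]
      finite_VF by simp
  moreover assume "\<not> 3 \<le> n"
  then have "n = 0 \<or> n = 1 \<or> n = 2" by auto
  then have "n choose 2 \<le> 1" by (auto simp: choose_two)
  ultimately show False using card_EF_ge_3 by simp
qed

lemma is_copyE:
  assumes "is_copy U D"
  obtains f where "inj_on f VF" "f ` VF \<subseteq> V" "\<forall>e\<in>EF. f ` e \<in> E"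
    "U = f ` VF" "D = (\<lambda>e. f ` e) ` EF"
  using assms unfolding is_copy_def embeds_def by blast

lemma finite_copy: "is_copy U D \<Longrightarrow> finite U"
  using finite_VF by (elim is_copyE) simp

lemma card_copy: "is_copy U D \<Longrightarrow> card U = n"
  by (elim is_copyE) (simp add: card_image)

lemma copy_subset_V: "is_copy U D \<Longrightarrow> U \<subseteq> V"
  by (elim is_copyE) auto

lemma copy_edges_subset_E: "is_copy U D \<Longrightarrow> D \<subseteq> E"
  by (elim is_copyE) auto

lemma finite_copy_edges: "is_copy U D \<Longrightarrow> finite D"
  using copy_edges_subset_E finite_E by (rule finite_subset)

lemma card_copy_edges: "is_copy U D \<Longrightarrow> card D = k"
proof (elim is_copyE)
  fix f assume inj: "inj_on f VF" and D: "D = (\<lambda>e. f ` e) ` EF"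
  have "inj_on ((`) f) EF"
    using inj_on_image_Pow[OF inj] inj_on_subset EF_subset_Pow by blast
  then show "card D = k" unfolding D by (rule card_image)
qed

lemma copy_edge:
  assumes "is_copy U D" "e \<in> D"
  obtains a b where "a \<noteq> b" "e = {a,b}" "a \<in> U" "b \<in> U"
proof (rule is_copyE[OF assms(1)])
  fix f assume inj: "inj_on f VF" and U: "U = f ` VF" and D: "D = (\<lambda>e. f ` e) ` EF"
  obtain e0 where e0: "e0 \<in> EF" "e = f ` e0" using D assms(2) by blast
  then obtain a b where "a \<noteq> b" "e0 = {a,b}" "a \<in> VF" "b \<in> VF"
    using sgraph_F unfolding sgraph_def by blast
  moreover from this inj have "f a \<noteq> f b" by (meson inj_on_contraD)
  ultimately show thesis using that[of "f a" "f b"] e0 U by simp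
qed

lemma copy_edge_subset: "is_copy U D \<Longrightarrow> e \<in> D \<Longrightarrow> e \<subseteq> U"
  by (blast elim: copy_edge)

lemma copy_edges_subset_Pow: "is_copy U D \<Longrightarrow> D \<subseteq> Pow U"
  by (blast elim: copy_edge)

lemma copy_edge_nonempty: "is_copy U D \<Longrightarrow> e \<in> D \<Longrightarrow> e \<noteq> {}"
  by (blast elim: copy_edge)

lemma copy_nonempty: "is_copy U D \<Longrightarrow> U \<noteq> {}"
  using card_copy card_VF_ge_3 by fastforce

lemma copy_centre:
  assumes "is_copy U D"
  obtains c where "c \<in> U" "\<forall>u\<in>U. u \<noteq> c \<longrightarrow> {c,u} \<in> D"
proof (rule is_copyE[OF assms])
  fix f assume U: "U = f ` VF" and D: "D = (\<lambda>e. f ` e) ` EF"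
  obtain c where c: "c \<in> VF" "\<forall>u\<in>VF. u \<noteq> c \<longrightarrow> {c,u} \<in> EF"
    using gamma_one_F unfolding gamma_one_def by blast
  have "{f c, f u} \<in> D" if "u \<in> VF" "f u \<noteq> f c" for u
  proof -
    have "{c,u} \<in> EF" using c that by (cases "u = c") auto
    then show ?thesis unfolding D by (rule rev_image_eqI) simp
  qed
  then have "\<forall>u\<in>U. u \<noteq> f c \<longrightarrow> {f c, u} \<in> D" unfolding U by blast
  moreover have "f c \<in> U" using c(1) U by blast
  ultimately show thesis by (intro that)
qed

lemma centre_adjacent:
  assumes "is_copy U D" "c \<in> U" "\<forall>u\<in>U. u \<noteq> c \<longrightarrow> {c,u} \<in> D" "p \<in> U"
  shows "c \<in> cnbh p" "p \<in> cnbh c"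
proof -
  have "p = c \<or> {c,p} \<in> E" using assms copy_edges_subset_E[OF assms(1)] by blast
  then show "c \<in> cnbh p" "p \<in> cnbh c" by (auto simp: cnbh_iff insert_commute)
qed

lemma copy_iso: "is_copy U D \<Longrightarrow> iso_copy VF EF U D"
  unfolding iso_copy_def bij_betw_def by (elim is_copyE) blast

lemma k_le_card_Un:
  assumes "is_copy U D" "D \<subseteq> S \<union> T" "S \<subseteq> E" "T \<subseteq> E"
  shows "k \<le> card S + card T"
  using card_le_card_Un[OF assms(2)] finite_subset[OF _ finite_E] assms
    card_copy_edges[OF assms(1)] by simp

lemma k_le_card_insert_Un:
  assumes "is_copy U D" "D \<subseteq> insert f (S \<union> T)" "S \<subseteq> E" "T \<subseteq> E"
  shows "k \<le> card S + card T + 1"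
proof -
  have fin: "finite (S \<union> T)" using assms(3,4) finite_E finite_subset by blast
  have "k \<le> card (insert f (S \<union> T))"
    using card_mono[OF _ assms(2)] fin card_copy_edges[OF assms(1)] by simp
  also have "\<dots> \<le> card (S \<union> T) + 1" using fin by (simp add: card_insert_if)
  also have "\<dots> \<le> card S + card T + 1" using card_Un_le[of S T] by simp
  finally show ?thesis .
qed

lemma card_avoiding:
  assumes "is_copy U D"
  shows "card (avoiding D M) = k - card {e\<in>D. e \<inter> M \<noteq> {}}"
proof -
  have "avoiding D M = D - {e\<in>D. e \<inter> M \<noteq> {}}" by blast
  then show ?thesis
    using finite_copy_edges[OF assms] card_copy_edges[OF assms] by (simp add: card_Diff_subset)
qed

lemma card_avoiding_vertex: "is_copy U D \<Longrightarrow> card (avoiding D {v}) = k - deg D v"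
  using card_avoiding[of U D "{v}"] by (simp add: deg_def)

lemma deg_le_k:
  assumes "is_copy U D"
  shows "deg D v \<le> k"
proof -
  have "deg D v \<le> card D" unfolding deg_def using finite_copy_edges[OF assms] by (simp add: card_mono)
  then show ?thesis using card_copy_edges[OF assms] by simp
qed

lemma deg_ge_card:
  assumes "is_copy U D" "\<forall>u\<in>S. {v,u} \<in> D" "v \<notin> S"
  shows "card S \<le> deg D v"
proof -
  have "inj_on (\<lambda>u. {v,u}) S" using assms(3) by (auto simp: inj_on_def doubleton_eq_iff)
  moreover have "(\<lambda>u. {v,u}) ` S \<subseteq> {e\<in>D. v \<in> e}" using assms(2) by auto
  moreover have "finite {e\<in>D. v \<in> e}" using finite_copy_edges[OF assms(1)] by simp
  ultimately show ?thesis unfolding deg_def by (rule card_inj_on_le)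
qed

lemma deg_centre:
  assumes "is_copy U D" "c \<in> U" "\<forall>u\<in>U. u \<noteq> c \<longrightarrow> {c,u} \<in> D"
  shows "n - 1 \<le> deg D c"
proof -
  have "card (U - {c}) \<le> deg D c" using assms by (intro deg_ge_card) auto
  then show ?thesis using card_copy[OF assms(1)] finite_copy[OF assms(1)] assms(2) by simp
qed

lemma deg_ge_1:
  assumes "is_copy U D" "v \<in> U"
  shows "1 \<le> deg D v"
proof -
  obtain c where c: "c \<in> U" "\<forall>u\<in>U. u \<noteq> c \<longrightarrow> {c,u} \<in> D" by (rule copy_centre[OF assms(1)])
  show ?thesis
  proof (cases "v = c")
    case True
    then show ?thesis using deg_centre[OF assms(1) c] card_VF_ge_3 by simp
  next
    case False
    then have "{c,v} \<in> D" using c assms(2) by blast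
    then have "{v,c} \<in> D" by (simp add: insert_commute)
    then show ?thesis using deg_ge_card[OF assms(1), of "{c}" v] False by simp
  qed
qed

lemma card_avoiding_centre:
  assumes "is_copy U D" "c \<in> U" "\<forall>u\<in>U. u \<noteq> c \<longrightarrow> {c,u} \<in> D" "c \<in> M"
  shows "card (avoiding D M) \<le> k - (n - 1)"
proof -
  have "{e\<in>D. c \<in> e} \<subseteq> {e\<in>D. e \<inter> M \<noteq> {}}" using assms(4) by blast
  then have "deg D c \<le> card {e\<in>D. e \<inter> M \<noteq> {}}"
    unfolding deg_def using finite_copy_edges[OF assms(1)] by (simp add: card_mono)
  then show ?thesis using deg_centre[OF assms(1-3)] card_avoiding[OF assms(1)] by simp
qed

lemma card_avoiding_two:
  assumes "is_copy U D" "x \<in> U" "y \<in> U" "x \<noteq> y" "x \<in> M" "y \<in> M"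
  shows "card (avoiding D M) \<le> k - 2"
proof -
  obtain c where c: "c \<in> U" "\<forall>u\<in>U. u \<noteq> c \<longrightarrow> {c,u} \<in> D" by (rule copy_centre[OF assms(1)])
  show ?thesis
  proof (cases "c \<in> M")
    case True
    then show ?thesis using card_avoiding_centre[OF assms(1) c True] card_VF_ge_3 by arith
  next
    case False
    then have "{{c,x},{c,y}} \<subseteq> {e\<in>D. e \<inter> M \<noteq> {}}" using c assms(2,3,5,6) by auto
    moreover have "finite {e\<in>D. e \<inter> M \<noteq> {}}" using finite_copy_edges[OF assms(1)] by simp
    ultimately have "card {{c,x},{c,y}} \<le> card {e\<in>D. e \<inter> M \<noteq> {}}" by (simp add: card_mono)
    moreover have "card {{c,x},{c,y}} = 2" using assms(4) by (auto simp: doubleton_eq_iff)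
    ultimately have "2 \<le> card {e\<in>D. e \<inter> M \<noteq> {}}" by simp
    then show ?thesis using card_avoiding[OF assms(1)] by simp
  qed
qed

lemma triangle_copy_edge:
  assumes "is_copy U D" "n = 3" "u \<in> U" "w \<in> U" "u \<noteq> w"
  shows "{u,w} \<in> D"
proof -
  have "card (U - {u,w}) = 1"
    using card_copy[OF assms(1)] assms finite_copy[OF assms(1)] by (simp add: card_Diff_subset)
  then obtain b where "U - {u,w} = {b}" by (rule card_1_singletonE)
  then have U: "U = {u,w,b}" using assms(3,4) by auto
  have "D \<subseteq> {{u,w},{u,b},{w,b}}"
  proof
    fix e assume "e \<in> D"
    then obtain x y where "x \<noteq> y" "e = {x,y}" "x \<in> U" "y \<in> U" by (rule copy_edge[OF assms(1)])
    then show "e \<in> {{u,w},{u,b},{w,b}}" using U by (auto simp: insert_commute)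
  qed
  moreover have "card {{u,w},{u,b},{w,b}} \<le> 3" by (auto simp: card_insert_if)
  ultimately have "D = {{u,w},{u,b},{w,b}}"
    using card_copy_edges[OF assms(1)] card_EF_ge_3 card_seteq[of "{{u,w},{u,b},{w,b}}" D] by simp
  then show ?thesis by simp
qed

lemma triangle_deg:
  assumes "is_copy U D" "n = 3" "v \<in> U"
  shows "2 \<le> deg D v"
proof -
  have "\<forall>u\<in>U - {v}. {v,u} \<in> D" using triangle_copy_edge[OF assms(1,2,3)] by blast
  then have "card (U - {v}) \<le> deg D v" using deg_ge_card[OF assms(1)] by blast
  then show ?thesis using card_copy[OF assms(1)] finite_copy[OF assms(1)] assms by simp
qed

lemma card_avoiding_le_k_minus_3:
  assumes Q: "is_copy U D" and v: "v \<in> M" and M: "M \<subseteq> U"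
    and nbrs: "\<forall>u\<in>U. {v,u} \<in> D \<longrightarrow> u \<in> M"
  shows "card (avoiding D M) \<le> k - 3"
proof -
  obtain c where c: "c \<in> U" "\<forall>u\<in>U. u \<noteq> c \<longrightarrow> {c,u} \<in> D" by (rule copy_centre[OF Q])
  have "c \<in> M"
  proof (cases "c = v")
    case False
    then have "{v,c} \<in> D" using c v M by (metis insert_commute subsetD)
    then show ?thesis using nbrs c(1) by blast
  qed (use v in simp)
  show ?thesis
  proof (cases "n = 3")
    case False
    then show ?thesis using card_avoiding_centre[OF Q c \<open>c \<in> M\<close>] card_VF_ge_3 by simp
  next
    case True
    have "U \<subseteq> M" using triangle_copy_edge[OF Q True] nbrs v M by blast
    then have "avoiding D M = {}" using copy_edge_subset[OF Q] copy_edge_nonempty[OF Q] by blast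
    then have "card (avoiding D M) = 0" by (simp only: card.empty)
    then show ?thesis by simp
  qed
qed

text \<open>Q is the copy (U, D) with p exchanged for the outside vertex b.\<close>

lemma deg_ge_centre_of_exchanged_copy:
  assumes Q: "is_copy UQ DQ" and C: "is_copy U D"
    and UQ: "UQ \<subseteq> insert b U" "b \<notin> U" and p: "p \<in> U" "p \<notin> UQ"
    and a: "a \<in> UQ" "a \<in> U" "\<forall>u\<in>UQ. u \<noteq> a \<longrightarrow> {a,u} \<in> DQ"
    and inherited: "\<forall>e\<in>DQ. e \<noteq> {a,b} \<longrightarrow> e \<subseteq> U \<longrightarrow> e \<in> D"
  shows "n - 2 \<le> deg D a"
proof -
  have "UQ - {b} \<subseteq> U - {p}" using UQ p by blast
  moreover have "n - 1 \<le> card (UQ - {b})"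
    using diff_card_le_card_Diff[of "{b}" UQ] card_copy[OF Q] by simp
  moreover have "card (U - {p}) = n - 1" using card_copy[OF C] finite_copy[OF C] p(1) by simp
  ultimately have same: "UQ - {b} = U - {p}"
    using card_seteq[of "U - {p}" "UQ - {b}"] finite_copy[OF C] by simp
  have "\<forall>u\<in>U - {p, a}. {a,u} \<in> D"
  proof
    fix u assume u: "u \<in> U - {p, a}"
    then have "{a,u} \<in> DQ" using same a(3) by blast
    moreover have "{a,u} \<noteq> {a,b}" using u UQ(2) by (auto simp: doubleton_eq_iff)
    moreover have "{a,u} \<subseteq> U" using u a(2) by blast
    ultimately show "{a,u} \<in> D" by (rule inherited[rule_format])
  qed
  then have "card (U - {p, a}) \<le> deg D a" by (rule deg_ge_card[OF C]) simp
  moreover have "card (U - {p, a}) = n - 2"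
  proof -
    have "p \<noteq> a" using p(2) a(1) by blast
    then show ?thesis using card_copy[OF C] finite_copy[OF C] p(1) a(2) by (simp add: card_Diff_subset)
  qed
  ultimately show ?thesis by simp
qed

lemma copy_centred_at_degree_two_vertex:
  assumes Q: "is_copy UQ DQ" and centre: "\<forall>u\<in>UQ. u \<noteq> z \<longrightarrow> {z,u} \<in> DQ"
    and nbrs: "\<And>u. {z,u} \<in> E \<Longrightarrow> u = r \<or> u = w"
  shows "{r,w} \<in> DQ"
proof -
  have sub: "UQ \<subseteq> {z, r, w}" using centre nbrs copy_edges_subset_E[OF Q] by blast
  then have "n \<le> card {z, r, w}" using card_copy[OF Q] by (metis card_mono finite.emptyI finite_insert)
  moreover have "card {z, r, w} \<le> 3" by (auto simp: card_insert_if)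
  ultimately have n3: "n = 3" and three: "card {z, r, w} = 3" using card_VF_ge_3 by simp_all
  then have "UQ = {z, r, w}" using card_seteq[OF _ sub] card_copy[OF Q] by simp
  moreover have "r \<noteq> w" using three by (auto simp: card_insert_if split: if_splits)
  ultimately show ?thesis using triangle_copy_edge[OF Q n3] by blast
qed

lemma copy_with_pendant_edge:
  assumes Q: "is_copy UQ DQ" and DQ: "DQ \<subseteq> insert {w,z} D" and D: "D \<subseteq> Pow U"
    and w: "w \<in> U" and z: "z \<notin> U" and wz: "{w,z} \<in> DQ"
  shows "\<forall>u\<in>UQ. u \<noteq> w \<longrightarrow> {w,u} \<in> DQ" "UQ \<subseteq> insert z U"
proof -
  obtain c where c: "c \<in> UQ" "\<forall>u\<in>UQ. u \<noteq> c \<longrightarrow> {c,u} \<in> DQ" by (rule copy_centre[OF Q])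
  have "{e\<in>DQ. z \<in> e} \<subseteq> {{w,z}}" using DQ D z by blast
  then have "deg DQ z \<le> 1" unfolding deg_def by (rule card_le_1_if_subset_singleton)
  then have "c \<noteq> z" using deg_centre[OF Q c] card_VF_ge_3 by auto
  moreover have "z \<in> UQ" using copy_edge_subset[OF Q wz] by blast
  ultimately have "{c,z} \<in> DQ" using c(2) by auto
  moreover have "{c,z} \<notin> D" using z D by blast
  ultimately have "{c,z} = {w,z}" using DQ by blast
  then have "c = w" using \<open>c \<noteq> z\<close> by (auto simp: doubleton_eq_iff)
  then show centre: "\<forall>u\<in>UQ. u \<noteq> w \<longrightarrow> {w,u} \<in> DQ" using c(2) by blast
  have "u \<in> insert z U" if "u \<in> UQ" "u \<noteq> w" for u
  proof -
    have "{w,u} \<in> D \<or> {w,u} = {w,z}" using centre that DQ by blast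
    then show ?thesis using that(2) D by (auto simp: doubleton_eq_iff)
  qed
  then show "UQ \<subseteq> insert z U" using w by blast
qed

lemma copy_avoiding_if_not_isolating:
  assumes "x \<in> V" "\<not> isolating V E VF EF {x}"
  obtains U D where "is_copy U D" "U \<inter> cnbh x = {}"
proof -
  have "has_copy VF EF (V - cnbh x) {e\<in>E. e \<subseteq> V - cnbh x}"
    using assms by (simp add: isolating_def cnbh_def Let_def)
  then obtain f where f: "embeds f VF EF (V - cnbh x) {e\<in>E. e \<subseteq> V - cnbh x}"
    unfolding has_copy_def by blast
  then have "embeds f VF EF V E" unfolding embeds_def by blast
  then have "is_copy (f ` VF) ((\<lambda>e. f ` e) ` EF)" unfolding is_copy_def by blast
  moreover have "f ` VF \<inter> cnbh x = {}" using f unfolding embeds_def by blast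
  ultimately show thesis by (rule that)
qed

lemma iota_eq_1:
  assumes "embeds f VF EF V E" "isolating V E VF EF {x}"
  shows "iota V E VF EF = 1"
  unfolding iota_def
proof (rule Least_equality)
  show "\<exists>D. isolating V E VF EF D \<and> card D = 1" using assms(2) by (intro exI[of _ "{x}"]) simp
next
  fix m assume "\<exists>D. isolating V E VF EF D \<and> card D = m"
  then obtain D where D: "isolating V E VF EF D" "card D = m" by blast
  have "embeds f VF EF V {e\<in>E. e \<subseteq> V}" using assms(1) E_subset_Pow unfolding embeds_def by blast
  then have "has_copy VF EF (V - closed_nbhd V E {}) {e\<in>E. e \<subseteq> V - closed_nbhd V E {}}"
    unfolding has_copy_def closed_nbhd_def by auto
  then have "D \<noteq> {}" using D(1) unfolding isolating_def Let_def by blast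
  moreover have "finite D"
    using D(1) by (simp add: isolating_def finite_subset[OF _ finite_V])
  ultimately show "1 \<le> m" using D(2) card_gt_0_iff[of D] by simp
qed

lemma disjoint_copies_extra_edges:
  assumes "is_copy U1 D1" "is_copy U2 D2" "U1 \<inter> U2 = {}"
  shows "D1 \<inter> D2 = {}" "card (E - D1 - D2) = 3"
proof -
  show disj: "D1 \<inter> D2 = {}"
  proof (rule equals0I)
    fix e assume "e \<in> D1 \<inter> D2"
    then have "e \<subseteq> U1 \<inter> U2" "e \<noteq> {}"
      using copy_edge_subset[OF assms(1)] copy_edge_subset[OF assms(2)]
        copy_edge_nonempty[OF assms(1)] by blast+
    then show False using assms(3) by blast
  qed
  have "card (D1 \<union> D2) = 2 * k"
    using disj finite_copy_edges[OF assms(1)] finite_copy_edges[OF assms(2)]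
      card_copy_edges[OF assms(1)] card_copy_edges[OF assms(2)] by (simp add: card_Un_disjoint)
  moreover have "D1 \<union> D2 \<subseteq> E"
    using copy_edges_subset_E[OF assms(1)] copy_edges_subset_E[OF assms(2)] by blast
  ultimately have "card (E - (D1 \<union> D2)) = 3"
    using card_Diff_subset[OF finite_subset[OF _ finite_E]] card_E by simp
  moreover have "E - D1 - D2 = E - (D1 \<union> D2)" by blast
  ultimately show "card (E - D1 - D2) = 3" by simp
qed

lemma E_eq_copies_Un_three_edges:
  assumes copies: "is_copy U1 D1" "is_copy U2 D2" "U1 \<inter> U2 = {}"
    and edges: "{f1, f2, f3} \<subseteq> E" "f1 \<noteq> f2" "f1 \<noteq> f3" "f2 \<noteq> f3"
    and outside: "\<forall>f\<in>{f1,f2,f3}. \<not> f \<subseteq> U1 \<and> \<not> f \<subseteq> U2"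
  shows "E = D1 \<union> D2 \<union> {f1, f2, f3}"
proof -
  have "f \<notin> D1 \<and> f \<notin> D2" if "f \<in> {f1, f2, f3}" for f
    using outside[rule_format, OF that] copy_edges_subset_Pow[OF copies(1)]
      copy_edges_subset_Pow[OF copies(2)] by blast
  then have "{f1, f2, f3} \<subseteq> E - D1 - D2" using edges(1) by auto
  moreover have "card {f1, f2, f3} = 3" using edges(2-4) by simp
  ultimately have "{f1, f2, f3} = E - D1 - D2"
    using card_seteq[of "E - D1 - D2" "{f1, f2, f3}"] disjoint_copies_extra_edges(2)[OF copies]
      finite_E by simp
  then show ?thesis
    using copy_edges_subset_E[OF copies(1)] copy_edges_subset_E[OF copies(2)] by blast
qed

section \<open>A copy with a sole exit vertex\<close>

definition sole_exit :: "'a set \<Rightarrow> 'a \<Rightarrow> bool" where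
  "sole_exit U v \<longleftrightarrow> v \<notin> U \<and> (\<forall>a b. {a,b} \<in> E \<longrightarrow> a \<in> U \<longrightarrow> b \<notin> U \<longrightarrow> b = v)"

lemma copy_avoiding_sole_exit_disjoint:
  assumes Z: "is_copy UZ DZ" and exit: "sole_exit UZ v"
    and Q: "is_copy UQ DQ" "UQ \<inter> cnbh v = {}"
    and z: "z \<in> UZ" "z \<in> cnbh v"
  shows "UQ \<inter> UZ = {}"
proof (rule ccontr)
  assume "UQ \<inter> UZ \<noteq> {}"
  then obtain y where y: "y \<in> UQ" "y \<in> UZ" by blast
  obtain w where w: "w \<in> UQ" "\<forall>u\<in>UQ. u \<noteq> w \<longrightarrow> {w,u} \<in> DQ" by (rule copy_centre[OF Q(1)])
  have stays: "b \<in> UZ" if "{a,b} \<in> DQ" "a \<in> UZ" for a b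
  proof (rule ccontr)
    assume "b \<notin> UZ"
    moreover have "{a,b} \<in> E" using that(1) copy_edges_subset_E[OF Q(1)] by blast
    ultimately have "b = v" using exit that(2) unfolding sole_exit_def by blast
    moreover have "b \<in> UQ" using copy_edge_subset[OF Q(1) that(1)] by blast
    ultimately show False using Q(2) cnbh_self by blast
  qed
  show False
  proof (cases "w \<in> UZ")
    case True
    have "u \<in> UZ" if "u \<in> UQ" for u
      using stays[of w u] True w that by (cases "u = w") auto
    then have "UQ \<subseteq> UZ - {z}" using Q(2) z(2) by blast
    then have "card UQ \<le> card (UZ - {z})" using finite_copy[OF Z] by (intro card_mono) auto
    also have "\<dots> < card UZ" using finite_copy[OF Z] z(1) by (rule card_Diff1_less)
    finally show False using card_copy[OF Q(1)] card_copy[OF Z] by simp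
  next
    case False
    then have "{y,w} \<in> DQ" using w y by (metis insert_commute)
    then show False using stays y(2) False by blast
  qed
qed

lemma sole_exit_edge:
  assumes Z: "is_copy UZ DZ" and exit: "sole_exit UZ v" and v: "v \<in> V"
  obtains z where "z \<in> UZ" "{v,z} \<in> E"
proof -
  obtain z0 where "z0 \<in> UZ" using copy_nonempty[OF Z] by blast
  moreover have "v \<notin> UZ" using exit unfolding sole_exit_def by blast
  ultimately obtain a b where "{a,b} \<in> E" "a \<in> UZ" "b \<notin> UZ"
    using edge_leaving[OF copy_subset_V[OF Z] _ v] by blast
  moreover from this have "b = v" using exit unfolding sole_exit_def by blast
  ultimately show thesis using that[of a] by (simp add: insert_commute)
qed

lemma sole_exit_two_step_path:
  assumes Z: "is_copy UZ DZ" and exit: "sole_exit UZ v" and v: "v \<in> V" and z: "z \<in> UZ"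
    and Q: "is_copy UQ DQ" "UQ \<inter> cnbh v = {}" "UQ \<inter> UZ = {}"
  obtains u u' where "{v,u} \<in> E" "u \<notin> UZ" "{u,u'} \<in> E" "u' \<notin> UZ" "u' \<notin> cnbh v"
proof -
  let ?S = "UZ \<union> cnbh v"
  obtain q0 where q0: "q0 \<in> UQ" using copy_nonempty[OF Q(1)] by blast
  have "?S \<subseteq> V" using copy_subset_V[OF Z] cnbh_subset_V[OF v] by blast
  moreover have "q0 \<in> V" "q0 \<notin> ?S" using q0 Q(2,3) copy_subset_V[OF Q(1)] by blast+
  ultimately obtain a b where ab: "{a,b} \<in> E" "a \<in> ?S" "b \<notin> ?S"
    using edge_leaving[of ?S z q0] z by blast
  have "a \<notin> UZ" using exit ab cnbh_self unfolding sole_exit_def by blast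
  moreover have "a \<noteq> v" using ab(1,3) cnbh_edge by blast
  ultimately have "{v,a} \<in> E" using ab(2) cnbh_iff by blast
  then show thesis using that[of a b] ab \<open>a \<notin> UZ\<close> by blast
qed

end

locale no_isolating_vertex = isolation_setting +
  assumes not_isolating: "x \<in> V \<Longrightarrow> \<not> isolating V E VF EF {x}"
begin

lemma obtain_copy_avoiding:
  assumes "x \<in> V"
  obtains U D where "is_copy U D" "U \<inter> cnbh x = {}"
  using copy_avoiding_if_not_isolating[OF assms not_isolating[OF assms]] by blast

lemma special_if_sole_exit:
  assumes Z: "is_copy UZ DZ" and exit: "sole_exit UZ v" and v: "v \<in> V"
  shows "special (2 * k + 3) VF EF V E"
proof -
  have vZ: "v \<notin> UZ" using exit unfolding sole_exit_def by blast
  obtain UQ DQ where Q: "is_copy UQ DQ" and avoid: "UQ \<inter> cnbh v = {}"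
    by (rule obtain_copy_avoiding[OF v])
  have vQ: "v \<notin> UQ" using avoid cnbh_self by blast
  obtain z where z: "z \<in> UZ" "{v,z} \<in> E" by (rule sole_exit_edge[OF Z exit v])
  have QZ: "UQ \<inter> UZ = {}"
    by (rule copy_avoiding_sole_exit_disjoint[OF Z exit Q avoid z(1)]) (use z(2) cnbh_edge in blast)
  then have ZQ: "UZ \<inter> UQ = {}" by blast
  obtain q0 where q0: "q0 \<in> UQ" using copy_nonempty[OF Q] by blast
  obtain u u' where u: "{v,u} \<in> E" "u \<notin> UZ" and u': "{u,u'} \<in> E" "u' \<notin> UZ" "u' \<notin> cnbh v"
    by (rule sole_exit_two_step_path[OF Z exit v z(1) Q avoid QZ])
  have uv: "u \<in> cnbh v" using u(1) cnbh_edge by blast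
  have E_eq: "E = DZ \<union> DQ \<union> {{v,z},{v,u},{u,u'}}"
  proof (rule E_eq_copies_Un_three_edges[OF Z Q ZQ])
    show "{{v,z},{v,u},{u,u'}} \<subseteq> E" using z u u' by blast
    show "{v,z} \<noteq> {v,u}" "{v,z} \<noteq> {u,u'}" "{v,u} \<noteq> {u,u'}"
      using z(1) u(2) u'(2,3) cnbh_self by (auto simp: doubleton_eq_iff)
    show "\<forall>f\<in>{{v,z},{v,u},{u,u'}}. \<not> f \<subseteq> UZ \<and> \<not> f \<subseteq> UQ"
      using vZ vQ u(2) uv avoid by blast
  qed
  have u'Q: "u' \<in> UQ"
  proof -
    obtain a b where ab: "{a,b} \<in> E" "a \<in> UQ" "b \<notin> UQ"
      using edge_leaving[OF copy_subset_V[OF Q] q0 v vQ] by blast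
    then have "{a,b} \<notin> DZ \<union> DQ"
      using QZ copy_edge_subset[OF Z] copy_edge_subset[OF Q] by blast
    then have "{a,b} \<in> {{v,z},{v,u},{u,u'}}" using ab(1) E_eq by blast
    moreover have "a \<noteq> v" "a \<noteq> z" "a \<noteq> u" using ab(2) vQ z(1) QZ uv avoid by blast+
    ultimately show ?thesis using ab(2) by (auto simp: doubleton_eq_iff)
  qed
  have V_eq: "V = UZ \<union> UQ \<union> {v, u}"
  proof
    show "UZ \<union> UQ \<union> {v, u} \<subseteq> V"
      using copy_subset_V[OF Z] copy_subset_V[OF Q] v u(1) E_subset_Pow by blast
    show "V \<subseteq> UZ \<union> UQ \<union> {v, u}"
      using Union_E E_eq copy_edge_subset[OF Z] copy_edge_subset[OF Q] z(1) u'Q by blast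
  qed
  have "v \<noteq> u" using u(1) by (elim edge_of_G) (auto simp: doubleton_eq_iff)
  moreover have "u \<notin> UQ" using uv avoid by blast
  ultimately show ?thesis
    using special_two_copies_joined_by_path[OF copy_iso[OF Z] copy_iso[OF Q] ZQ
        vZ vQ u(2) _ _ z(1) u'Q V_eq E_eq] by blast
qed

end

section \<open>Two disjoint copies and their three extra edges\<close>

locale disjoint_copies = no_isolating_vertex +
  fixes U1 D1 U2 D2
  assumes copy1: "is_copy U1 D1" and copy2: "is_copy U2 D2" and disjoint: "U1 \<inter> U2 = {}"
begin

lemma disjoint_copies_swap: "disjoint_copies VF EF V E U2 D2 U1 D1"
  using no_isolating_vertex_axioms copy1 copy2 disjoint
  by (simp add: disjoint_copies_def disjoint_copies_axioms_def Int_commute)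

lemma card_extra: "card (E - D1 - D2) = 3"
  by (rule disjoint_copies_extra_edges(2)[OF copy1 copy2 disjoint])

lemma extra_if_leaving:
  assumes "e \<in> E" "e \<inter> A \<noteq> {}" "\<not> e \<subseteq> A" "U1 \<subseteq> A" "A \<inter> U2 = {}"
  shows "e \<in> E - D1 - D2"
  using assms copy_edges_subset_Pow[OF copy1] copy_edges_subset_Pow[OF copy2] by blast

lemma special_if_extra_edges_leave_through:
  assumes v: "v \<in> U2" and through: "\<forall>e\<in>E - D1 - D2. e \<inter> U1 \<noteq> {} \<longrightarrow> \<not> e \<subseteq> U1 \<longrightarrow> v \<in> e"
  shows "special (2 * k + 3) VF EF V E"
proof -
  have "sole_exit U1 v"
    unfolding sole_exit_def
  proof (intro conjI allI impI)
    show vU: "v \<notin> U1" using v disjoint by blast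
    fix a b assume ab: "{a,b} \<in> E" "a \<in> U1" "b \<notin> U1"
    then have "{a,b} \<in> E - D1 - D2" by (intro extra_if_leaving[OF _ _ _ order_refl disjoint]) auto
    then have "v \<in> {a,b}" by (rule through[rule_format]) (use ab(2,3) in blast)+
    then show "b = v" using ab(2) vU by blast
  qed
  then show ?thesis using special_if_sole_exit[OF copy1] v copy_subset_V[OF copy2] by blast
qed

lemma cross_edge:
  assumes "e \<in> E" "e \<inter> U1 \<noteq> {}" "e \<inter> U2 \<noteq> {}"
  obtains p q where "e = {p,q}" "p \<in> U1" "q \<in> U2"
proof -
  obtain a b where e: "e = {a,b}" using assms(1) by (elim edge_of_G)
  show thesis
  proof (cases "a \<in> U1")
    case True
    then have "b \<in> U2" using assms(3) disjoint e by blast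
    then show thesis using that True e by blast
  next
    case False
    then have "b \<in> U1" "a \<in> U2" using assms(2,3) e disjoint by blast+
    then show thesis using that e by (metis insert_commute)
  qed
qed

lemma half_edge:
  assumes "e \<in> E" "e \<inter> U1 \<noteq> {}" "e \<inter> U2 = {}" "\<not> e \<subseteq> U1"
  obtains r z where "e = {r,z}" "r \<in> U1" "z \<notin> U1" "z \<notin> U2"
proof -
  obtain a b where e: "e = {a,b}" using assms(1) by (elim edge_of_G)
  show thesis
  proof (cases "a \<in> U1")
    case True
    then show thesis using that e assms(3,4) by blast
  next
    case False
    then show thesis using that[of b a] e assms(2,3) by (auto simp: insert_commute)
  qed
qed

lemma edges_on_sides:
  assumes A: "U1 \<subseteq> A" "A \<inter> U2 = {}" and M: "M1 \<subseteq> cnbh x" "M2 \<subseteq> cnbh x"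
  shows "E \<inter> Pow (A - cnbh x) \<subseteq> avoiding D1 M1 \<union> {e\<in>E - D1 - D2. e \<subseteq> A - cnbh x}"
    and "E \<inter> Pow (V - A - cnbh x) \<subseteq> avoiding D2 M2 \<union> {e\<in>E - D1 - D2. e \<subseteq> V - A - cnbh x}"
proof -
  show "E \<inter> Pow (A - cnbh x) \<subseteq> avoiding D1 M1 \<union> {e\<in>E - D1 - D2. e \<subseteq> A - cnbh x}"
  proof
    fix e assume e: "e \<in> E \<inter> Pow (A - cnbh x)"
    then have "e \<notin> D2"
      using A(2) copy_edges_subset_Pow[OF copy2] copy_edge_nonempty[OF copy2, of e] by blast
    moreover have "e \<inter> M1 = {}" using e M(1) by blast
    ultimately show "e \<in> avoiding D1 M1 \<union> {e\<in>E - D1 - D2. e \<subseteq> A - cnbh x}" using e by blast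
  qed
  show "E \<inter> Pow (V - A - cnbh x) \<subseteq> avoiding D2 M2 \<union> {e\<in>E - D1 - D2. e \<subseteq> V - A - cnbh x}"
  proof
    fix e assume e: "e \<in> E \<inter> Pow (V - A - cnbh x)"
    then have "e \<notin> D1"
      using A(1) copy_edges_subset_Pow[OF copy1] copy_edge_nonempty[OF copy1, of e] by blast
    moreover have "e \<inter> M2 = {}" using e M(2) by blast
    ultimately show "e \<in> avoiding D2 M2 \<union> {e\<in>E - D1 - D2. e \<subseteq> V - A - cnbh x}" using e by blast
  qed
qed

text \<open>Either Q lies on one side of V - N[x] = (A - N[x]) \<union> (V - A - N[x]), or its centre lies
  on one side and a single spoke crosses along the matching X; so k is bounded by the edges
  available on that side, plus one.\<close>

lemma copy_avoiding_cnbh_cases: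
  assumes Q: "is_copy UQ DQ" "UQ \<inter> cnbh x = {}"
    and A: "U1 \<subseteq> A" "A \<inter> U2 = {}" and M: "M1 \<subseteq> cnbh x" "M2 \<subseteq> cnbh x"
    and cross: "{e\<in>E - D1 - D2. e \<inter> cnbh x = {} \<and> e \<inter> A \<noteq> {} \<and> \<not> e \<subseteq> A} \<subseteq> X"
    and matching: "\<forall>e\<in>X. \<forall>e'\<in>X. e \<noteq> e' \<longrightarrow> e \<inter> e' = {}"
  obtains (side1) "UQ \<subseteq> A" "DQ \<subseteq> avoiding D1 M1 \<union> {e\<in>E - D1 - D2. e \<subseteq> A - cnbh x}"
    "k \<le> card (avoiding D1 M1) + card {e\<in>E - D1 - D2. e \<subseteq> A - cnbh x}"
  | (side2) "UQ \<inter> A = {}" "DQ \<subseteq> avoiding D2 M2 \<union> {e\<in>E - D1 - D2. e \<subseteq> V - A - cnbh x}"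
    "k \<le> card (avoiding D2 M2) + card {e\<in>E - D1 - D2. e \<subseteq> V - A - cnbh x}"
  | (across1) a b where "{a,b} \<in> X" "{a,b} \<in> DQ" "a \<in> A" "b \<notin> A"
      "\<forall>u\<in>UQ. u \<noteq> a \<longrightarrow> {a,u} \<in> DQ" "UQ \<subseteq> insert b A"
      "DQ \<subseteq> insert {a,b} (avoiding D1 M1 \<union> {e\<in>E - D1 - D2. e \<subseteq> A - cnbh x})"
      "k \<le> card (avoiding D1 M1) + card {e\<in>E - D1 - D2. e \<subseteq> A - cnbh x} + 1"
  | (across2) a b where "{a,b} \<in> X" "{a,b} \<in> DQ" "a \<notin> A" "b \<in> A"
      "\<forall>u\<in>UQ. u \<noteq> a \<longrightarrow> {a,u} \<in> DQ" "UQ \<subseteq> insert b (V - A)"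
      "DQ \<subseteq> insert {a,b} (avoiding D2 M2 \<union> {e\<in>E - D1 - D2. e \<subseteq> V - A - cnbh x})"
      "k \<le> card (avoiding D2 M2) + card {e\<in>E - D1 - D2. e \<subseteq> V - A - cnbh x} + 1"
proof -
  define P1 where "P1 = A - cnbh x"
  define P2 where "P2 = V - A - cnbh x"
  obtain w where w: "w \<in> UQ" "\<forall>u\<in>UQ. u \<noteq> w \<longrightarrow> {w,u} \<in> DQ" by (rule copy_centre[OF Q(1)])
  have DQ_E: "DQ \<subseteq> E" by (rule copy_edges_subset_E[OF Q(1)])
  have in_E: "avoiding D1 M1 \<subseteq> E" "avoiding D2 M2 \<subseteq> E" "{e\<in>E - D1 - D2. P e} \<subseteq> E" for P
    using copy_edges_subset_E[OF copy1] copy_edges_subset_E[OF copy2] by blast+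
  have edges: "\<forall>e\<in>DQ. \<exists>a b. a \<noteq> b \<and> e = {a,b} \<and> a \<in> UQ \<and> b \<in> UQ"
    using copy_edge[OF Q(1)] by metis
  have cover: "UQ \<subseteq> P1 \<union> P2" "UQ \<subseteq> P2 \<union> P1"
    using copy_subset_V[OF Q(1)] Q(2) unfolding P1_def P2_def by blast+
  have disj: "P1 \<inter> P2 = {}" "P2 \<inter> P1 = {}" unfolding P1_def P2_def by blast+
  have crossing: "\<forall>e\<in>DQ. e \<inter> P1 \<noteq> {} \<longrightarrow> e \<inter> P2 \<noteq> {} \<longrightarrow> e \<in> X"
  proof (intro ballI impI)
    fix e assume e: "e \<in> DQ" "e \<inter> P1 \<noteq> {}" "e \<inter> P2 \<noteq> {}"
    have "e \<in> E" "e \<inter> cnbh x = {}" using e(1) DQ_E copy_edge_subset[OF Q(1)] Q(2) by blast+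
    moreover have "e \<inter> A \<noteq> {}" "\<not> e \<subseteq> A" using e(2,3) unfolding P1_def P2_def by blast+
    ultimately show "e \<in> X" using cross extra_if_leaving[OF _ _ _ A] by blast
  qed
  then have crossing': "\<forall>e\<in>DQ. e \<inter> P2 \<noteq> {} \<longrightarrow> e \<inter> P1 \<noteq> {} \<longrightarrow> e \<in> X" by blast
  have inside1: "E \<inter> Pow P1 \<subseteq> avoiding D1 M1 \<union> {e\<in>E - D1 - D2. e \<subseteq> A - cnbh x}"
    and inside2: "E \<inter> Pow P2 \<subseteq> avoiding D2 M2 \<union> {e\<in>E - D1 - D2. e \<subseteq> V - A - cnbh x}"
    unfolding P1_def P2_def by (rule edges_on_sides[OF A M])+
  show thesis
  proof (cases "w \<in> P1")
    case True
    from star_across_matching[OF edges w cover(1) disj(1) crossing matching True] show thesis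
    proof (elim disjE bexE conjE)
      assume UQ: "UQ \<subseteq> P1" and DQ: "DQ \<subseteq> Pow P1"
      have "DQ \<subseteq> E \<inter> Pow P1" using DQ DQ_E by blast
      then have DQ1: "DQ \<subseteq> avoiding D1 M1 \<union> {e\<in>E - D1 - D2. e \<subseteq> A - cnbh x}"
        using inside1 by (rule order_trans)
      have "UQ \<subseteq> A" using UQ unfolding P1_def by blast
      then show thesis using DQ1 k_le_card_Un[OF Q(1) DQ1 in_E(1,3)] by (rule side1)
    next
      fix b assume b: "b \<in> P2" "{w,b} \<in> X" "{w,b} \<in> DQ" "UQ \<subseteq> insert b P1"
        "DQ \<subseteq> insert {w,b} (Pow P1)"
      have "DQ \<subseteq> insert {w,b} (E \<inter> Pow P1)" using b(5) DQ_E by blast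
      then have DQ1: "DQ \<subseteq> insert {w,b} (avoiding D1 M1 \<union> {e\<in>E - D1 - D2. e \<subseteq> A - cnbh x})"
        using insert_mono[OF inside1] by (rule order_trans)
      have "w \<in> A" "b \<notin> A" "UQ \<subseteq> insert b A" using True b(1,4) unfolding P1_def P2_def by blast+
      then show thesis using b(2,3) w(2) DQ1 k_le_card_insert_Un[OF Q(1) DQ1 in_E(1,3)]
        by (intro across1)
    qed
  next
    case False
    then have w2: "w \<in> P2" using w(1) cover by blast
    from star_across_matching[OF edges w cover(2) disj(2) crossing' matching w2] show thesis
    proof (elim disjE bexE conjE)
      assume UQ: "UQ \<subseteq> P2" and DQ: "DQ \<subseteq> Pow P2"
      have "DQ \<subseteq> E \<inter> Pow P2" using DQ DQ_E by blast
      then have DQ2: "DQ \<subseteq> avoiding D2 M2 \<union> {e\<in>E - D1 - D2. e \<subseteq> V - A - cnbh x}"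
        using inside2 by (rule order_trans)
      have "UQ \<inter> A = {}" using UQ unfolding P2_def by blast
      then show thesis using DQ2 k_le_card_Un[OF Q(1) DQ2 in_E(2,3)] by (rule side2)
    next
      fix b assume b: "b \<in> P1" "{w,b} \<in> X" "{w,b} \<in> DQ" "UQ \<subseteq> insert b P2"
        "DQ \<subseteq> insert {w,b} (Pow P2)"
      have "DQ \<subseteq> insert {w,b} (E \<inter> Pow P2)" using b(5) DQ_E by blast
      then have DQ2: "DQ \<subseteq> insert {w,b} (avoiding D2 M2 \<union> {e\<in>E - D1 - D2. e \<subseteq> V - A - cnbh x})"
        using insert_mono[OF inside2] by (rule order_trans)
      have "w \<notin> A" "b \<in> A" "UQ \<subseteq> insert b (V - A)"
        using w2 b(1,4) unfolding P1_def P2_def by blast+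
      then show thesis using b(2,3) w(2) DQ2 k_le_card_insert_Un[OF Q(1) DQ2 in_E(2,3)]
        by (intro across2)
    qed
  qed
qed

lemma no_vertex_with_two_cross_edges:
  assumes Y: "E - D1 - D2 = {{x,u},{x,u'},g}" and x: "x \<in> U2"
    and u: "u \<in> U1" "u' \<in> U1" "u \<noteq> u'" and g: "g \<inter> U1 \<noteq> {}"
  shows False
proof -
  have YE: "{x,u} \<in> E" "{x,u'} \<in> E" using Y by blast+
  obtain UQ DQ where Q: "is_copy UQ DQ" "UQ \<inter> cnbh x = {}"
    using obtain_copy_avoiding x copy_subset_V[OF copy2] by blast
  obtain c2 where c2: "c2 \<in> U2" "\<forall>v\<in>U2. v \<noteq> c2 \<longrightarrow> {c2,v} \<in> D2" by (rule copy_centre[OF copy2])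
  have M1: "{u,u'} \<subseteq> cnbh x" using YE cnbh_edge by blast
  have M2: "{x,c2} \<subseteq> cnbh x" using centre_adjacent(1)[OF copy2 c2 x] cnbh_self by blast
  have cross: "{e\<in>E - D1 - D2. e \<inter> cnbh x = {} \<and> e \<inter> U1 \<noteq> {} \<and> \<not> e \<subseteq> U1} \<subseteq> {g}"
    unfolding Y using cnbh_self[of x] by auto
  have "{e\<in>E - D1 - D2. e \<subseteq> U1 - cnbh x} \<subseteq> {g}" unfolding Y using cnbh_self[of x] by auto
  then have Y1: "card {e\<in>E - D1 - D2. e \<subseteq> U1 - cnbh x} \<le> 1"
    by (rule card_le_1_if_subset_singleton)
  have Y1_cross: "{e\<in>E - D1 - D2. e \<subseteq> U1 - cnbh x} = {}" if "\<not> g \<subseteq> U1"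
    using Y that cnbh_self[of x] by auto
  have Y2: "{e\<in>E - D1 - D2. e \<subseteq> V - U1 - cnbh x} = {}" using Y u g by auto
  have b1: "card (avoiding D1 {u,u'}) \<le> k - 2" by (rule card_avoiding_two[OF copy1 u]) simp_all
  have b2: "card (avoiding D2 {x,c2}) \<le> k - (n - 1)" by (rule card_avoiding_centre[OF copy2 c2]) simp
  have matching: "\<forall>e\<in>{g}. \<forall>e'\<in>{g}. e \<noteq> e' \<longrightarrow> e \<inter> e' = {}" by simp
  show False
  proof (cases rule: copy_avoiding_cnbh_cases[OF Q order_refl disjoint M1 M2 cross matching,
      case_names side1 side2 across1 across2])
    case side1
    then show False using side1(3) b1 Y1 card_EF_ge_3 by linarith
  next
    case side2
    then have "k \<le> card (avoiding D2 {x,c2})" unfolding Y2 by simp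
    then show False using b2 card_VF_ge_3 card_EF_ge_3 by linarith
  next
    case (across1 a b)
    then have "\<not> g \<subseteq> U1" by blast
    then have "k \<le> card (avoiding D1 {u,u'}) + 1"
      using across1(8) unfolding Y1_cross[OF \<open>\<not> g \<subseteq> U1\<close>] by simp
    then show False using b1 card_EF_ge_3 by linarith
  next
    case (across2 a b)
    then have "k \<le> card (avoiding D2 {x,c2}) + 1" unfolding Y2 by simp
    then show False using b2 card_VF_ge_3 card_EF_ge_3 by linarith
  qed
qed

lemma deg_ge_centre_of_copy_across:
  assumes Q: "is_copy UQ DQ" "UQ \<inter> cnbh x = {}" and p: "p \<in> U1" "p \<in> cnbh x"
    and across: "{a,b} \<in> DQ" "a \<in> U1" "b \<notin> U1" "\<forall>u\<in>UQ. u \<noteq> a \<longrightarrow> {a,u} \<in> DQ"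
      "UQ \<subseteq> insert b U1" "DQ \<subseteq> insert {a,b} D1"
  shows "n - 2 \<le> deg D1 a"
proof (rule deg_ge_centre_of_exchanged_copy[OF Q(1) copy1 across(5,3) p(1)])
  show "p \<notin> UQ" using p(2) Q(2) by blast
  show "a \<in> UQ" using copy_edge_subset[OF Q(1) across(1)] by blast
  show "\<forall>e\<in>DQ. e \<noteq> {a,b} \<longrightarrow> e \<subseteq> U1 \<longrightarrow> e \<in> D1" using across(6) by blast
qed (use across(2,4) in blast)+

lemma three_cross_edges_degrees:
  assumes Y: "E - D1 - D2 = {{p1,q1},{p2,q2},{p3,q3}}"
    and p: "p1 \<in> U1" "p2 \<in> U1" "p3 \<in> U1" and q: "q1 \<in> U2" "q2 \<in> U2" "q3 \<in> U2"
    and distinct: "p2 \<noteq> p3" "q2 \<noteq> q3"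
  shows "deg D1 p1 \<le> 1 \<and> (n - 2 \<le> deg D1 p2 \<or> n - 2 \<le> deg D1 p3)"
proof -
  obtain UQ DQ where Q: "is_copy UQ DQ" "UQ \<inter> cnbh q1 = {}"
    using obtain_copy_avoiding q(1) copy_subset_V[OF copy2] by blast
  obtain c2 where c2: "c2 \<in> U2" "\<forall>v\<in>U2. v \<noteq> c2 \<longrightarrow> {c2,v} \<in> D2" by (rule copy_centre[OF copy2])
  have M1: "{p1} \<subseteq> cnbh q1" using Y cnbh_edge(2)[of p1 q1] by blast
  have M2: "{q1,c2} \<subseteq> cnbh q1" using centre_adjacent(1)[OF copy2 c2 q(1)] cnbh_self by blast
  have cross: "{e\<in>E - D1 - D2. e \<inter> cnbh q1 = {} \<and> e \<inter> U1 \<noteq> {} \<and> \<not> e \<subseteq> U1}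
      \<subseteq> {{p2,q2},{p3,q3}}"
    unfolding Y using cnbh_self[of q1] by auto
  have matching: "\<forall>e\<in>{{p2,q2},{p3,q3}}. \<forall>e'\<in>{{p2,q2},{p3,q3}}. e \<noteq> e' \<longrightarrow> e \<inter> e' = {}"
    using distinct p q disjoint by auto
  have Y1: "{e\<in>E - D1 - D2. e \<subseteq> U1 - cnbh q1} = {}" using Y q disjoint by auto
  have Y2: "{e\<in>E - D1 - D2. e \<subseteq> V - U1 - cnbh q1} = {}" using Y p by auto
  have b1: "card (avoiding D1 {p1}) = k - deg D1 p1" by (rule card_avoiding_vertex[OF copy1])
  have b2: "card (avoiding D2 {q1,c2}) \<le> k - (n - 1)"
    by (rule card_avoiding_centre[OF copy2 c2]) simp
  have deg: "1 \<le> deg D1 p1" "deg D1 p1 \<le> k" using deg_ge_1[OF copy1 p(1)] deg_le_k[OF copy1] by auto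
  show ?thesis
  proof (cases rule: copy_avoiding_cnbh_cases[OF Q order_refl disjoint M1 M2 cross matching,
      case_names side1 side2 across1 across2])
    case side1
    then have "k \<le> card (avoiding D1 {p1})" unfolding Y1 by simp
    then show ?thesis using b1 deg card_EF_ge_3 by linarith
  next
    case side2
    then have "k \<le> card (avoiding D2 {q1,c2})" unfolding Y2 by simp
    then show ?thesis using b2 card_VF_ge_3 card_EF_ge_3 by linarith
  next
    case (across2 a b)
    then have "k \<le> card (avoiding D2 {q1,c2}) + 1" unfolding Y2 by simp
    then show ?thesis using b2 card_VF_ge_3 card_EF_ge_3 by linarith
  next
    case (across1 a b)
    then have "k \<le> card (avoiding D1 {p1}) + 1" unfolding Y1 by simp
    then have "deg D1 p1 \<le> 1" using b1 deg by linarith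
    moreover have "DQ \<subseteq> insert {a,b} D1" using across1(7) unfolding Y1 by blast
    then have "n - 2 \<le> deg D1 a"
      using M1 by (intro deg_ge_centre_of_copy_across[OF Q p(1) _ across1(2-6)]) auto
    moreover have "a = p2 \<or> a = p3"
      using across1(1,3) q disjoint by (auto simp: doubleton_eq_iff)
    ultimately show ?thesis by blast
  qed
qed

lemma not_three_cross_edges:
  assumes Y: "E - D1 - D2 = {{p1,q1},{p2,q2},{p3,q3}}"
    and p: "p1 \<in> U1" "p2 \<in> U1" "p3 \<in> U1" and q: "q1 \<in> U2" "q2 \<in> U2" "q3 \<in> U2"
  shows False
proof -
  have distinct: "{p1,q1} \<noteq> {p2,q2}" "{p1,q1} \<noteq> {p3,q3}" "{p2,q2} \<noteq> {p3,q3}"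
    using card_extra unfolding Y by (auto simp: card_insert_if split: if_splits)
  have Y': "E - D2 - D1 = {{p1,q1},{p2,q2},{p3,q3}}" using Y by blast
  note swapped = disjoint_copies.no_vertex_with_two_cross_edges[OF disjoint_copies_swap]
  consider "p1 = p2 \<or> p1 = p3 \<or> p2 = p3" | "q1 = q2 \<or> q1 = q3 \<or> q2 = q3"
    | "p1 \<noteq> p2" "p1 \<noteq> p3" "p2 \<noteq> p3" "q1 \<noteq> q2" "q1 \<noteq> q3" "q2 \<noteq> q3"
    by blast
  then show False
  proof cases
    case 1
    then show False
    proof (elim disjE)
      assume "p1 = p2"
      then show False using swapped[of p1 q1 q2 "{p3,q3}"] Y' distinct(1) p q by auto
    next
      assume "p1 = p3"
      then show False using swapped[of p1 q1 q3 "{p2,q2}"] Y' distinct(2) p q by auto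
    next
      assume "p2 = p3"
      then show False using swapped[of p2 q2 q3 "{p1,q1}"] Y' distinct(3) p q by auto
    qed
  next
    case 2
    then show False
    proof (elim disjE)
      assume "q1 = q2"
      then show False using no_vertex_with_two_cross_edges[of q1 p1 p2 "{p3,q3}"] Y distinct(1) p q
        by (auto simp: insert_commute)
    next
      assume "q1 = q3"
      then show False using no_vertex_with_two_cross_edges[of q1 p1 p3 "{p2,q2}"] Y distinct(2) p q
        by (auto simp: insert_commute)
    next
      assume "q2 = q3"
      then show False using no_vertex_with_two_cross_edges[of q2 p2 p3 "{p1,q1}"] Y distinct(3) p q
        by (auto simp: insert_commute)
    qed
  next
    case 3
    have "deg D1 p1 \<le> 1" "n - 2 \<le> deg D1 p2 \<or> n - 2 \<le> deg D1 p3"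
      using three_cross_edges_degrees[OF Y p q] 3 by auto
    moreover have "deg D1 p2 \<le> 1" "deg D1 p3 \<le> 1"
      using three_cross_edges_degrees[of p2 q2 p1 q1 p3 q3] three_cross_edges_degrees[of p3 q3 p1 q1 p2 q2]
        Y p q 3 by (auto simp: insert_commute)
    ultimately have "n = 3" using card_VF_ge_3 by linarith
    then show False using triangle_deg[OF copy1 _ p(1)] \<open>deg D1 p1 \<le> 1\<close> by simp
  qed
qed

lemma two_cross_edges_degrees:
  assumes Y: "E - D1 - D2 = {{p,q},{p',q'},f}"
    and p: "p \<in> U1" "p' \<in> U1" and q: "q \<in> U2" "q' \<in> U2" "q \<noteq> q'"
    and f: "f \<inter> U1 = {}"
  shows "deg D1 p \<le> 1 \<and> n - 2 \<le> deg D1 p'"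
proof -
  have "f \<in> E" using Y by blast
  then have f_nonempty: "f \<noteq> {}" by (blast elim: edge_of_G)
  obtain UQ DQ where Q: "is_copy UQ DQ" "UQ \<inter> cnbh q = {}"
    using obtain_copy_avoiding q(1) copy_subset_V[OF copy2] by blast
  have M1: "{p} \<subseteq> cnbh q" using Y cnbh_edge(2)[of p q] by blast
  have M2: "U2 \<inter> cnbh q \<subseteq> cnbh q" by blast
  have cross: "{e\<in>E - D1 - D2. e \<inter> cnbh q = {} \<and> e \<inter> U1 \<noteq> {} \<and> \<not> e \<subseteq> U1} \<subseteq> {{p',q'}}"
    unfolding Y using cnbh_self[of q] f by auto
  have matching: "\<forall>e\<in>{{p',q'}}. \<forall>e'\<in>{{p',q'}}. e \<noteq> e' \<longrightarrow> e \<inter> e' = {}" by simp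
  have Y1: "{e\<in>E - D1 - D2. e \<subseteq> U1 - cnbh q} = {}" using Y q f f_nonempty disjoint by auto
  have "{e\<in>E - D1 - D2. e \<subseteq> V - U1 - cnbh q} \<subseteq> {f}" unfolding Y using p by auto
  then have Y2: "card {e\<in>E - D1 - D2. e \<subseteq> V - U1 - cnbh q} \<le> 1"
    by (rule card_le_1_if_subset_singleton)
  have b1: "card (avoiding D1 {p}) = k - deg D1 p" by (rule card_avoiding_vertex[OF copy1])
  have b2: "card (avoiding D2 (U2 \<inter> cnbh q)) \<le> k - 3"
    using copy_edges_subset_E[OF copy2] cnbh_self[of q] q(1)
    by (intro card_avoiding_le_k_minus_3[OF copy2, of q]) (auto intro: cnbh_edge)
  have deg: "1 \<le> deg D1 p" "deg D1 p \<le> k" using deg_ge_1[OF copy1 p(1)] deg_le_k[OF copy1] by auto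
  show ?thesis
  proof (cases rule: copy_avoiding_cnbh_cases[OF Q order_refl disjoint M1 M2 cross matching,
      case_names side1 side2 across1 across2])
    case side1
    then have "k \<le> card (avoiding D1 {p})" unfolding Y1 by simp
    then show ?thesis using b1 deg card_EF_ge_3 by linarith
  next
    case side2
    then show ?thesis using side2(3) b2 Y2 card_EF_ge_3 by linarith
  next
    case (across2 a b)
    then show ?thesis using across2(8) b2 Y2 card_EF_ge_3 by linarith
  next
    case (across1 a b)
    then have "k \<le> card (avoiding D1 {p}) + 1" unfolding Y1 by simp
    then have "deg D1 p \<le> 1" using b1 deg by linarith
    moreover have "DQ \<subseteq> insert {a,b} D1" using across1(7) unfolding Y1 by blast
    then have "n - 2 \<le> deg D1 a"
      using M1 by (intro deg_ge_centre_of_copy_across[OF Q p(1) _ across1(2-6)]) auto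
    moreover have "a = p'" using across1(1,3) q disjoint by (auto simp: doubleton_eq_iff)
    ultimately show ?thesis by blast
  qed
qed

lemma special_if_two_cross_edges:
  assumes Y: "E - D1 - D2 = {{p,q},{p',q'},f}" and distinct: "{p,q} \<noteq> {p',q'}"
    and p: "p \<in> U1" "p' \<in> U1" and q: "q \<in> U2" "q' \<in> U2"
    and f: "f \<inter> U1 = {}" "f \<inter> U2 \<noteq> {}"
  shows "special (2 * k + 3) VF EF V E"
proof (cases "q = q'")
  case True
  show ?thesis
    by (rule special_if_extra_edges_leave_through[OF q(1)]) (unfold Y True, use f(1) in auto)
next
  case False
  show ?thesis
  proof (cases "p = p'")
    case True
    have "E - D2 - D1 = {{p,q},{p,q'},f}" using Y True by blast
    then have False
      by (rule disjoint_copies.no_vertex_with_two_cross_edges[OF disjoint_copies_swap _ p(1) q False f(2)])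
    then show ?thesis ..
  next
    case p_ne: False
    have "deg D1 p \<le> 1" "n - 2 \<le> deg D1 p'"
      using two_cross_edges_degrees[OF Y p q False f(1)] by auto
    moreover have "deg D1 p' \<le> 1" "n - 2 \<le> deg D1 p"
      using two_cross_edges_degrees[of p' q' p q f] Y p q False f(1) by (auto simp: insert_commute)
    ultimately have "n = 3" using card_VF_ge_3 by linarith
    then show ?thesis using triangle_deg[OF copy1 _ p(1)] \<open>deg D1 p \<le> 1\<close> by simp
  qed
qed

lemma not_detached_extra_edge:
  assumes Y: "E - D1 - D2 = {g1,g2,g}" and g12: "g1 \<subseteq> U1 \<union> U2" "g2 \<subseteq> U1 \<union> U2"
    and g: "g \<inter> (U1 \<union> U2) = {}"
  shows False
proof -
  have "g \<in> E" using Y by blast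
  then obtain a b where ab: "g = {a,b}" "a \<in> V" "b \<in> V" by (elim edge_of_G) blast
  obtain y where y: "y \<in> U1" using copy_nonempty[OF copy1] by blast
  have "g \<subseteq> V" "y \<in> V" "y \<notin> g" using ab y copy_subset_V[OF copy1] g by blast+
  then obtain c d where cd: "{c,d} \<in> E" "c \<in> g" "d \<notin> g"
    using edge_leaving[of g a y] ab(1) by blast
  then have "{c,d} \<notin> D1 \<union> D2"
    using g copy_edges_subset_Pow[OF copy1] copy_edges_subset_Pow[OF copy2] by blast
  then have "{c,d} \<in> E - D1 - D2" using cd(1) by blast
  then have "{c,d} \<in> {g1,g2,g}" unfolding Y .
  then show False using cd(2,3) g12 g by auto
qed

lemma not_one_cross_edge_two_pendants:
  assumes outdeg_ge_2: "\<And>U D. is_copy U D \<Longrightarrow> 2 \<le> outdeg U D"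
    and Y: "E - D1 - D2 = {{p,q},{r,z},{w,z'}}"
    and p: "p \<in> U1" "r \<in> U1" and q: "q \<in> U2" "w \<in> U2"
    and z: "z \<notin> U1" "z \<notin> U2" "z' \<notin> U1" "z' \<notin> U2" "z \<noteq> z'"
  shows False
proof -
  obtain UQ DQ where Q: "is_copy UQ DQ" "UQ \<inter> cnbh p = {}"
    using obtain_copy_avoiding p(1) copy_subset_V[OF copy1] by blast
  obtain c1 where c1: "c1 \<in> U1" "\<forall>v\<in>U1. v \<noteq> c1 \<longrightarrow> {c1,v} \<in> D1" by (rule copy_centre[OF copy1])
  have pq: "{p,q} \<in> E" using Y by blast
  let ?A = "insert z U1"
  have A: "U1 \<subseteq> ?A" "?A \<inter> U2 = {}" using z(2) disjoint by blast+
  have M1: "{p,c1} \<subseteq> cnbh p" using centre_adjacent(1)[OF copy1 c1 p(1)] cnbh_self by blast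
  have M2: "{q} \<subseteq> cnbh p" using cnbh_edge(1)[OF pq] by blast
  have cross: "{e\<in>E - D1 - D2. e \<inter> cnbh p = {} \<and> e \<inter> ?A \<noteq> {} \<and> \<not> e \<subseteq> ?A} \<subseteq> {}"
    unfolding Y using cnbh_self[of p] p q z disjoint by auto
  have "{e\<in>E - D1 - D2. e \<subseteq> ?A - cnbh p} \<subseteq> {{r,z}}"
    unfolding Y using q z disjoint by auto
  then have Y1: "card {e\<in>E - D1 - D2. e \<subseteq> ?A - cnbh p} \<le> 1"
    by (rule card_le_1_if_subset_singleton)
  have Y2: "{e\<in>E - D1 - D2. e \<subseteq> V - ?A - cnbh p} \<subseteq> {{w,z'}}" using Y p by auto
  have b1: "card (avoiding D1 {p,c1}) \<le> k - (n - 1)" by (rule card_avoiding_centre[OF copy1 c1]) simp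
  have b2: "card (avoiding D2 {q}) = k - deg D2 q" by (rule card_avoiding_vertex[OF copy2])
  have deg: "1 \<le> deg D2 q" "deg D2 q \<le> k" using deg_ge_1[OF copy2 q(1)] deg_le_k[OF copy2] by auto
  have matching: "\<forall>e\<in>{}. \<forall>e'\<in>{}. e \<noteq> e' \<longrightarrow> e \<inter> e' = {}" by simp
  show False
  proof (cases rule: copy_avoiding_cnbh_cases[OF Q A M1 M2 cross matching,
      case_names side1 side2 across1 across2])
    case side1
    then show False using side1(3) b1 Y1 card_VF_ge_3 card_EF_ge_3 by linarith
  next
    case side2
    define S where "S = avoiding D2 {q} \<union> {{w,z'}}"
    have DQ_S: "DQ \<subseteq> S"
      unfolding S_def using side2(2) Un_mono[OF order_refl Y2] by (rule order_trans)
    have S_E: "S \<subseteq> E" unfolding S_def using Y copy_edges_subset_E[OF copy2] by blast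
    have fin_S: "finite S" using S_E finite_E by (rule finite_subset)
    have "card S \<le> card (avoiding D2 {q}) + 1"
      unfolding S_def using card_Un_le[of "avoiding D2 {q}" "{{w,z'}}"] by simp
    moreover have "k \<le> card S" using card_mono[OF fin_S DQ_S] card_copy_edges[OF Q(1)] by simp
    moreover have "card (S - DQ) = card S - k"
      using card_Diff_subset[OF finite_subset[OF DQ_S fin_S] DQ_S] card_copy_edges[OF Q(1)] by simp
    ultimately have S_DQ: "card (S - DQ) + deg D2 q \<le> 1" using b2 deg by linarith
    have "{e\<in>E. e \<notin> DQ \<and> e \<inter> UQ \<noteq> {}} \<subseteq> (S - DQ) \<union> {e\<in>D2. q \<in> e}"
    proof
      fix e assume e: "e \<in> {e\<in>E. e \<notin> DQ \<and> e \<inter> UQ \<noteq> {}}"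
      have "e \<notin> D1" using e side2(1) copy_edges_subset_Pow[OF copy1] by blast
      moreover have "e \<noteq> {p,q}" "e \<noteq> {r,z}"
        using e Q(2) cnbh_self[of p] cnbh_edge(1)[OF pq] side2(1) p(2) by blast+
      ultimately have "e \<in> D2 \<or> e = {w,z'}" using e Y by blast
      then show "e \<in> (S - DQ) \<union> {e\<in>D2. q \<in> e}" using e unfolding S_def by blast
    qed
    then have "outdeg UQ DQ \<le> card (S - DQ) + deg D2 q"
      unfolding outdeg_def deg_def
      by (rule card_le_card_Un) (use fin_S finite_copy_edges[OF copy2] in auto)
    then show False using S_DQ outdeg_ge_2[OF Q(1)] by linarith
  qed simp_all
qed

lemma one_cross_edge_common_pendant_degrees:
  assumes Y: "E - D1 - D2 = {{p,q},{r,z},{w,z}}"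
    and p: "p \<in> U1" "r \<in> U1" and q: "q \<in> U2" "w \<in> U2" and z: "z \<notin> U1" "z \<notin> U2"
  shows "deg D2 q \<le> 1 \<and> w \<noteq> q \<and> n - 2 \<le> deg D2 w"
proof -
  obtain UQ DQ where Q: "is_copy UQ DQ" "UQ \<inter> cnbh p = {}"
    using obtain_copy_avoiding p(1) copy_subset_V[OF copy1] by blast
  obtain c1 where c1: "c1 \<in> U1" "\<forall>v\<in>U1. v \<noteq> c1 \<longrightarrow> {c1,v} \<in> D1" by (rule copy_centre[OF copy1])
  have pq: "{p,q} \<in> E" using Y by blast
  have M1: "{p,c1} \<subseteq> cnbh p" using centre_adjacent(1)[OF copy1 c1 p(1)] cnbh_self by blast
  have M2: "{q} \<subseteq> cnbh p" using cnbh_edge(1)[OF pq] by blast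
  have cross: "{e\<in>E - D1 - D2. e \<inter> cnbh p = {} \<and> e \<inter> U1 \<noteq> {} \<and> \<not> e \<subseteq> U1} \<subseteq> {{r,z}}"
    unfolding Y using cnbh_self[of p] q z disjoint by auto
  have matching: "\<forall>e\<in>{{r,z}}. \<forall>e'\<in>{{r,z}}. e \<noteq> e' \<longrightarrow> e \<inter> e' = {}" by simp
  have Y1: "{e\<in>E - D1 - D2. e \<subseteq> U1 - cnbh p} = {}" using Y q z disjoint by auto
  have Y2: "{e\<in>E - D1 - D2. e \<subseteq> V - U1 - cnbh p} \<subseteq> {{w,z}}" using Y p by auto
  have b1: "card (avoiding D1 {p,c1}) \<le> k - (n - 1)" by (rule card_avoiding_centre[OF copy1 c1]) simp
  have b2: "card (avoiding D2 {q}) = k - deg D2 q" by (rule card_avoiding_vertex[OF copy2])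
  have deg: "1 \<le> deg D2 q" "deg D2 q \<le> k" using deg_ge_1[OF copy2 q(1)] deg_le_k[OF copy2] by auto
  have z_edges: "u = r \<or> u = w" if "{z,u} \<in> E" for u
  proof -
    have "{z,u} \<in> E - D1 - D2"
      using that z copy_edges_subset_Pow[OF copy1] copy_edges_subset_Pow[OF copy2] by blast
    then show ?thesis unfolding Y using z p q by (auto simp: doubleton_eq_iff)
  qed
  show ?thesis
  proof (cases rule: copy_avoiding_cnbh_cases[OF Q order_refl disjoint M1 M2 cross matching,
      case_names side1 side2 across1 across2])
    case side1
    then have "k \<le> card (avoiding D1 {p,c1})" unfolding Y1 by simp
    then show ?thesis using b1 card_VF_ge_3 card_EF_ge_3 by linarith
  next
    case (across1 a b)
    then have "k \<le> card (avoiding D1 {p,c1}) + 1" unfolding Y1 by simp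
    then show ?thesis using b1 card_VF_ge_3 card_EF_ge_3 by linarith
  next
    case (across2 a b)
    then have ab: "a = z" "b = r" using p(2) z(1) by (auto simp: doubleton_eq_iff)
    have "{r,w} \<in> DQ"
      using copy_centred_at_degree_two_vertex[OF Q(1)] across2(5) z_edges unfolding ab by blast
    moreover have "DQ \<subseteq> insert {z,r} (D2 \<union> {{w,z}})" using across2(7) Y2 unfolding ab by blast
    moreover have "{r,w} \<notin> D2" using p(2) disjoint copy_edges_subset_Pow[OF copy2] by blast
    ultimately have False using p(2) q(2) z by (auto simp: doubleton_eq_iff)
    then show ?thesis ..
  next
    case side2
    have DQ: "DQ \<subseteq> avoiding D2 {q} \<union> {{w,z}}" using side2(2) Y2 by blast
    have wz_E: "{{w,z}} \<subseteq> E" using Y by blast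
    have av_E: "avoiding D2 {q} \<subseteq> E" using copy_edges_subset_E[OF copy2] by blast
    have "k \<le> card (avoiding D2 {q}) + 1" using k_le_card_Un[OF Q(1) DQ av_E wz_E] by simp
    then have deg_q: "deg D2 q \<le> 1" using b2 deg by linarith
    have wz: "{w,z} \<in> DQ"
    proof (rule ccontr)
      assume "{w,z} \<notin> DQ"
      then have "DQ \<subseteq> avoiding D2 {q} \<union> {}" using DQ by blast
      then have "k \<le> card (avoiding D2 {q})" using k_le_card_Un[OF Q(1) _ av_E empty_subsetI] by simp
      then show False using b2 deg card_EF_ge_3 by linarith
    qed
    then have wQ: "w \<in> UQ" and zQ: "z \<in> UQ" using copy_edge_subset[OF Q(1)] by blast+
    have "w \<noteq> q" using wQ Q(2) M2 by blast
    have "DQ \<subseteq> insert {w,z} D2" using DQ by blast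
    from copy_with_pendant_edge[OF Q(1) this copy_edges_subset_Pow[OF copy2] q(2) z(2) wz]
    have centre: "\<forall>u\<in>UQ. u \<noteq> w \<longrightarrow> {w,u} \<in> DQ" and "UQ \<subseteq> insert z U2" .
    moreover have "q \<notin> UQ" using Q(2) M2 by blast
    moreover have "\<forall>e\<in>DQ. e \<noteq> {w,z} \<longrightarrow> e \<subseteq> U2 \<longrightarrow> e \<in> D2" using DQ by blast
    ultimately have "n - 2 \<le> deg D2 w"
      using deg_ge_centre_of_exchanged_copy[OF Q(1) copy2 _ z(2) q(1) _ wQ q(2) centre] by blast
    then show ?thesis using deg_q \<open>w \<noteq> q\<close> by blast
  qed
qed

lemma not_one_cross_edge_common_pendant:
  assumes Y: "E - D1 - D2 = {{p,q},{r,z},{w,z}}"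
    and p: "p \<in> U1" "r \<in> U1" and q: "q \<in> U2" "w \<in> U2" and z: "z \<notin> U1" "z \<notin> U2"
    and deg: "2 \<le> deg D1 r" "2 \<le> deg D2 w"
  shows False
proof -
  have rz: "{r,z} \<in> E" and wz: "{w,z} \<in> E" using Y by blast+
  then have "z \<in> V" using E_subset_Pow by blast
  then obtain UQ DQ where Q: "is_copy UQ DQ" "UQ \<inter> cnbh z = {}" by (rule obtain_copy_avoiding)
  have M1: "{r} \<subseteq> cnbh z" and M2: "{w} \<subseteq> cnbh z" using cnbh_edge(2) rz wz by blast+
  have cross: "{e\<in>E - D1 - D2. e \<inter> cnbh z = {} \<and> e \<inter> U1 \<noteq> {} \<and> \<not> e \<subseteq> U1} \<subseteq> {{p,q}}"
    unfolding Y using cnbh_self[of z] by auto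
  have matching: "\<forall>e\<in>{{p,q}}. \<forall>e'\<in>{{p,q}}. e \<noteq> e' \<longrightarrow> e \<inter> e' = {}" by simp
  have Y1: "{e\<in>E - D1 - D2. e \<subseteq> U1 - cnbh z} = {}" using Y q z disjoint cnbh_self[of z] by auto
  have Y2: "{e\<in>E - D1 - D2. e \<subseteq> V - U1 - cnbh z} = {}" using Y p cnbh_self[of z] by auto
  have b1: "card (avoiding D1 {r}) = k - deg D1 r" by (rule card_avoiding_vertex[OF copy1])
  have b2: "card (avoiding D2 {w}) = k - deg D2 w" by (rule card_avoiding_vertex[OF copy2])
  have "deg D1 r \<le> k" "deg D2 w \<le> k" using deg_le_k[OF copy1] deg_le_k[OF copy2] by auto
  with deg b1 b2 have "card (avoiding D1 {r}) + 1 < k" "card (avoiding D2 {w}) + 1 < k"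
    by linarith+
  then show False
    by (cases rule: copy_avoiding_cnbh_cases[OF Q order_refl disjoint M1 M2 cross matching])
      (unfold Y1 Y2, simp_all)
qed

lemma special_if_one_cross_edge:
  assumes outdeg_ge_2: "\<And>U D. is_copy U D \<Longrightarrow> 2 \<le> outdeg U D"
    and Y: "E - D1 - D2 = {{p,q},e,f}" and p: "p \<in> U1" and q: "q \<in> U2"
    and e: "e \<inter> U1 \<noteq> {}" "e \<inter> U2 = {}" and f: "f \<inter> U1 = {}" "f \<inter> U2 \<noteq> {}"
  shows "special (2 * k + 3) VF EF V E"
proof -
  have eE: "e \<in> E" and fE: "f \<in> E" using Y by blast+
  note swap = disjoint_copies_swap
  have "E - D2 - D1 = E - D1 - D2" by blast
  also have "\<dots> = {{q,p},f,e}" unfolding Y by (simp add: insert_commute)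
  finally have Y': "E - D2 - D1 = {{q,p},f,e}" .
  consider "e \<subseteq> U1" | "f \<subseteq> U2" | "\<not> e \<subseteq> U1" "\<not> f \<subseteq> U2" by blast
  then show ?thesis
  proof cases
    case 1
    show ?thesis
      by (rule special_if_extra_edges_leave_through[OF q]) (unfold Y, use 1 f(1) in auto)
  next
    case 2
    show ?thesis
      by (rule disjoint_copies.special_if_extra_edges_leave_through[OF swap p])
        (unfold Y', use 2 e(2) in auto)
  next
    case 3
    obtain r z where rz: "e = {r,z}" "r \<in> U1" "z \<notin> U1" "z \<notin> U2"
      using half_edge[OF eE e 3(1)] by blast
    obtain w z' where wz: "f = {w,z'}" "w \<in> U2" "z' \<notin> U2" "z' \<notin> U1"
      using disjoint_copies.half_edge[OF swap fE f(2,1) 3(2)] by blast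
    show ?thesis
    proof (cases "z = z'")
      case False
      then show ?thesis
        using not_one_cross_edge_two_pendants[OF outdeg_ge_2 _ p rz(2) q wz(2) rz(3,4) wz(4,3)]
          Y rz(1) wz(1) by blast
    next
      case True
      have Yz: "E - D1 - D2 = {{p,q},{r,z},{w,z}}" using Y rz(1) wz(1) True by simp
      have "E - D2 - D1 = E - D1 - D2" by blast
      also have "\<dots> = {{q,p},{w,z},{r,z}}" unfolding Yz by (simp add: insert_commute)
      finally have Yz': "E - D2 - D1 = {{q,p},{w,z},{r,z}}" .
      have "deg D2 q \<le> 1" "n - 2 \<le> deg D2 w"
        using one_cross_edge_common_pendant_degrees[OF Yz p rz(2) q wz(2) rz(3,4)] by auto
      moreover have "n - 2 \<le> deg D1 r"
        using disjoint_copies.one_cross_edge_common_pendant_degrees[OF swap Yz' q wz(2) p rz(2) rz(4,3)]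
        by blast
      moreover have "n \<noteq> 3" using triangle_deg[OF copy2 _ q] \<open>deg D2 q \<le> 1\<close> by auto
      ultimately have "2 \<le> deg D1 r" "2 \<le> deg D2 w" using card_VF_ge_3 by linarith+
      then show ?thesis
        using not_one_cross_edge_common_pendant[OF Yz p rz(2) q wz(2) rz(3,4)] by blast
    qed
  qed
qed

lemma special_if_outdeg_ge_2:
  assumes outdeg_ge_2: "\<And>U D. is_copy U D \<Longrightarrow> 2 \<le> outdeg U D"
  shows "special (2 * k + 3) VF EF V E"
proof -
  define R where "R = {e\<in>E - D1 - D2. e \<inter> U1 \<noteq> {}}"
  define W where "W = {e\<in>E - D1 - D2. e \<inter> U2 \<noteq> {}}"
  have "{e\<in>E. e \<notin> D1 \<and> e \<inter> U1 \<noteq> {}} = R" "{e\<in>E. e \<notin> D2 \<and> e \<inter> U2 \<noteq> {}} = W"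
    unfolding R_def W_def
    using disjoint copy_edges_subset_Pow[OF copy1] copy_edges_subset_Pow[OF copy2] by blast+
  then have large: "2 \<le> card R" "2 \<le> card W"
    using outdeg_ge_2[OF copy1] outdeg_ge_2[OF copy2] unfolding outdeg_def by simp_all
  have sub: "R \<subseteq> E - D1 - D2" "W \<subseteq> E - D1 - D2" unfolding R_def W_def by blast+
  have cross: "\<exists>p q. g = {p,q} \<and> p \<in> U1 \<and> q \<in> U2" if "g \<in> R" "g \<in> W" for g
    using that cross_edge unfolding R_def W_def by blast
  have Y_eq: "E - D2 - D1 = E - D1 - D2" by blast
  note swap = disjoint_copies_swap
  show ?thesis
  proof (cases rule: two_large_subsets_of_three[OF card_extra sub large,
      case_names both_full R_pair W_pair same_pair shared])
    case both_full
    obtain g1 g2 g3 where Y: "E - D1 - D2 = {g1,g2,g3}" using card_extra by (metis card_3_iff)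
    obtain p1 q1 p2 q2 p3 q3 where "g1 = {p1,q1}" "g2 = {p2,q2}" "g3 = {p3,q3}"
      and U1: "p1 \<in> U1" "p2 \<in> U1" "p3 \<in> U1" and U2: "q1 \<in> U2" "q2 \<in> U2" "q3 \<in> U2"
      using cross[of g1] cross[of g2] cross[of g3] both_full Y by auto
    then have "E - D1 - D2 = {{p1,q1},{p2,q2},{p3,q3}}" using Y by simp
    from not_three_cross_edges[OF this U1 U2] show ?thesis ..
  next
    case (R_pair g1 g2 f)
    obtain p q p' q' where "g1 = {p,q}" "g2 = {p',q'}"
      and U1: "p \<in> U1" "p' \<in> U1" and U2: "q \<in> U2" "q' \<in> U2"
      using cross[of g1] cross[of g2] R_pair by auto
    then have Y: "E - D1 - D2 = {{p,q},{p',q'},f}" and distinct: "{p,q} \<noteq> {p',q'}"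
      using R_pair(1,2) by simp_all
    have "f \<in> E - D1 - D2" "f \<notin> R" "f \<in> W" using R_pair(1,4,5) by blast+
    then have "f \<inter> U1 = {}" "f \<inter> U2 \<noteq> {}" unfolding R_def W_def by blast+
    then show ?thesis by (rule special_if_two_cross_edges[OF Y distinct U1 U2])
  next
    case (W_pair g1 g2 f)
    obtain p q p' q' where "g1 = {p,q}" "g2 = {p',q'}"
      and U1: "p \<in> U1" "p' \<in> U1" and U2: "q \<in> U2" "q' \<in> U2"
      using cross[of g1] cross[of g2] W_pair by auto
    then have Y: "E - D2 - D1 = {{q,p},{q',p'},f}" and distinct: "{q,p} \<noteq> {q',p'}"
      using W_pair(1,2) Y_eq by (simp_all add: insert_commute)
    have "f \<in> E - D1 - D2" "f \<notin> W" "f \<in> R" using W_pair(1,4,5) by blast+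
    then have "f \<inter> U2 = {}" "f \<inter> U1 \<noteq> {}" unfolding R_def W_def by blast+
    then show ?thesis by (rule disjoint_copies.special_if_two_cross_edges[OF swap Y distinct U2 U1])
  next
    case (same_pair g1 g2 g)
    have "g1 \<subseteq> U1 \<union> U2" "g2 \<subseteq> U1 \<union> U2" using cross[of g1] cross[of g2] same_pair by auto
    moreover have "g \<inter> (U1 \<union> U2) = {}"
    proof -
      have "g \<in> E - D1 - D2" using same_pair(1) by blast
      moreover have "g \<notin> R" "g \<notin> W" using same_pair(2-4) by simp_all
      ultimately show ?thesis unfolding R_def W_def by blast
    qed
    ultimately have False by (rule not_detached_extra_edge[OF same_pair(1)])
    then show ?thesis ..
  next
    case (shared h e f)
    obtain p q where "h = {p,q}" and p: "p \<in> U1" and q: "q \<in> U2" using cross[of h] shared by auto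
    then have Y: "E - D1 - D2 = {{p,q},e,f}" using shared(1) by simp
    have "e \<in> E - D1 - D2" "f \<in> E - D1 - D2" using shared(1) by blast+
    moreover have "e \<in> R" "e \<notin> W" "f \<in> W" "f \<notin> R" using shared(2-6) by auto
    ultimately have "e \<inter> U1 \<noteq> {}" "e \<inter> U2 = {}" "f \<inter> U1 = {}" "f \<inter> U2 \<noteq> {}"
      unfolding R_def W_def by blast+
    from special_if_one_cross_edge[OF outdeg_ge_2 Y p q this] show ?thesis .
  qed
qed

end

lemma (in no_isolating_vertex) sole_exit_if_outdeg_le_1:
  assumes C: "is_copy U D" and outdeg: "outdeg U D \<le> 1"
  obtains v where "v \<in> V" "sole_exit U v"
proof -
  obtain c where c: "c \<in> U" "\<forall>u\<in>U. u \<noteq> c \<longrightarrow> {c,u} \<in> D" by (rule copy_centre[OF C])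
  have "c \<in> V" using c(1) copy_subset_V[OF C] by blast
  then obtain UQ DQ where Q: "is_copy UQ DQ" "UQ \<inter> cnbh c = {}" by (rule obtain_copy_avoiding)
  obtain y where "y \<in> UQ" using copy_nonempty[OF Q(1)] by blast
  then have "y \<in> V" "y \<notin> U" using Q copy_subset_V[OF Q(1)] centre_adjacent(2)[OF C c] by blast+
  then obtain a b where ab: "{a,b} \<in> E" "a \<in> U" "b \<notin> U"
    using edge_leaving[OF copy_subset_V[OF C] c(1)] by blast
  let ?T = "{e\<in>E. e \<notin> D \<and> e \<inter> U \<noteq> {}}"
  have T: "e \<in> ?T" if "e \<in> E" "e \<inter> U \<noteq> {}" "\<not> e \<subseteq> U" for e
    using that copy_edges_subset_Pow[OF C] by blast
  have "finite ?T" using finite_E by simp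
  moreover have "card ?T \<le> 1" using outdeg unfolding outdeg_def .
  ultimately have unique: "\<forall>x\<in>?T. \<forall>y\<in>?T. x = y" using card_le_Suc0_iff_eq by auto
  have ab_T: "{a,b} \<in> ?T" using T ab by blast
  have "sole_exit U b"
    unfolding sole_exit_def
  proof (intro conjI allI impI)
    show "b \<notin> U" by (rule ab(3))
    fix a' b' assume "{a',b'} \<in> E" "a' \<in> U" "b' \<notin> U"
    then have "{a',b'} \<in> ?T" by (intro T) auto
    then have "{a',b'} = {a,b}" using ab_T by (rule unique[rule_format])
    then show "b' = b" using \<open>a' \<in> U\<close> \<open>b' \<notin> U\<close> ab(2,3) by (auto simp: doubleton_eq_iff)
  qed
  moreover have "b \<in> V" using ab(1) E_subset_Pow by blast
  ultimately show thesis using that by blast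
qed

lemma (in no_isolating_vertex) obtain_disjoint_copies:
  obtains U1 D1 U2 D2 where "disjoint_copies VF EF V E U1 D1 U2 D2"
proof -
  obtain x where "x \<in> V" using connected_G unfolding connected_graph_def by blast
  then obtain U1 D1 where C: "is_copy U1 D1" by (rule obtain_copy_avoiding)
  obtain c where c: "c \<in> U1" "\<forall>u\<in>U1. u \<noteq> c \<longrightarrow> {c,u} \<in> D1" by (rule copy_centre[OF C])
  have "c \<in> V" using c(1) copy_subset_V[OF C] by blast
  then obtain U2 D2 where Q: "is_copy U2 D2" "U2 \<inter> cnbh c = {}" by (rule obtain_copy_avoiding)
  have "U1 \<inter> U2 = {}" using Q(2) centre_adjacent(2)[OF C c] by blast
  then have "disjoint_copies VF EF V E U1 D1 U2 D2"
    using no_isolating_vertex_axioms C Q(1) by (simp add: disjoint_copies_def disjoint_copies_axioms_def)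
  then show thesis by (rule that)
qed

lemma (in no_isolating_vertex) special_if_no_isolating_vertex: "special (2 * k + 3) VF EF V E"
proof (cases "\<exists>U D. is_copy U D \<and> outdeg U D \<le> 1")
  case True
  then obtain U D v where "is_copy U D" "v \<in> V" "sole_exit U v"
    using sole_exit_if_outdeg_le_1 by metis
  then show ?thesis using special_if_sole_exit by blast
next
  case False
  then have "\<And>U D. is_copy U D \<Longrightarrow> 2 \<le> outdeg U D" by fastforce
  moreover obtain U1 D1 U2 D2 where "disjoint_copies VF EF V E U1 D1 U2 D2"
    by (rule obtain_disjoint_copies)
  ultimately show ?thesis using disjoint_copies.special_if_outdeg_ge_2 by blast
qed

theorem lemma2p1:
  fixes VF :: "'b set" and EF :: "'b set set" and V :: "'a set" and E :: "'a set set"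
    and k :: nat
  assumes "k \<ge> 3"
    and "sgraph VF EF" and "card EF = k" and "gamma_one VF EF"
    and "connected_graph V E" and "card E = 2 * k + 3"
    and "\<exists>f1 f2. embeds f1 VF EF V E \<and> embeds f2 VF EF V E \<and> f1 ` VF \<inter> f2 ` VF = {}"
  shows "iota V E VF EF = 1 \<or> special (2 * k + 3) VF EF V E"
proof -
  interpret isolation_setting VF EF V E
    using assms(1-6) by unfold_locales simp_all
  obtain f where f: "embeds f VF EF V E" using assms(7) by blast
  show ?thesis
  proof (cases "\<exists>x\<in>V. isolating V E VF EF {x}")
    case True
    then show ?thesis using iota_eq_1[OF f] by blast
  next
    case False
    then interpret no_isolating_vertex VF EF V E by unfold_locales blast
    show ?thesis using special_if_no_isolating_vertex assms(3) by simp
  qed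
qed

end
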